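(* Let $F$, $P_F$, $\mathcal F_0$ be as described in the context. For any non-peripheral curve $C\subset\widehat{\mathbb C}\setminus P_F$ and any component $C'$ of $F^{-1}(C)$, $N_{\mathcal F_0}(C')\le N_{\mathcal F_0}(C)$.
   Context: Setting: $f,g$ are post-critically finite polynomials, each with a bounded immediate super-attracting basin of degree $d_0\ge2$ normalized to be the unit disk $\mathbb D$ on which the map is $z\mapsto z^{d_0}$, with the other critical orbits avoiding $\mathbb D$. With $\iota(\zeta)=e^{2\pi ik/(d_0-1)}/\zeta$ for a fixed $1\le k\le d_0-1$, the topological gluing is $F(z)=f(z)$ for $z\in\mathbb D^c$, $F(z)=\iota\circ g\circ\iota(z)$ for $z\in\mathbb D$; $P_F$ is its finite post-critical set. A non-peripheral curve is a simple closed curve in $\widehat{\mathbb C}\setminus P_F$ each of whose complementary components contains at least two points of $P_F$. A separating arc is a piecewise smooth Jordan curve. $\mathcal F_0$ is a fixed finite family of periodic separating arcs (formed by forward orbits of images of an admissible family of arcs built from external/internal rays of $f$ and $\tilde g=\iota\circ g\circ\iota$) such that $F$ permutes $\mathcal F_0$ and maps each $L\in\mathcal F_0$ homeomorphically onto $F(L)\in\mathcal F_0$. The complexity is $N_{\mathcal F_0}(C)=\min_{\gamma\sim C}\sum_{L\in\mathcal F_0}N(\gamma,L)$, minimum over simple closed curves $\gamma$ homotopic to $C$ in $\widehat{\mathbb C}\setminus P_F$, with $N(\gamma,L)$ the number of intersection points. *)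

theory Defs
  imports "HOL-Analysis.Analysis" "HOL-Computational_Algebra.Polynomial" "HOL-Library.Extended_Nat"
begin

section \<open>Riemann sphere: complex option, None = infinity, topology via stereographic projection\<close>

definition st :: "complex option \<Rightarrow> real \<times> real \<times> real" where
  "st w = (case w of None \<Rightarrow> (0, 0, 1)
     | Some z \<Rightarrow> (2 * Re z / ((cmod z)^2 + 1), 2 * Im z / ((cmod z)^2 + 1),
                  ((cmod z)^2 - 1) / ((cmod z)^2 + 1)))"

definition jordan_curve :: "complex option set \<Rightarrow> bool" where
  "jordan_curve C \<longleftrightarrow> (\<exists>p. simple_path p \<and> pathfinish p = pathstart p \<and> path_image p = st ` C)"

definition separating_arc :: "complex option set \<Rightarrow> bool" where
  "separating_arc L \<longleftrightarrow> (\<exists>p. simple_path p \<and> valid_path p \<and> pathfinish p = pathstart p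
                              \<and> path_image p = st ` L)"

text \<open>Free homotopy of (unoriented) simple closed curves in the sphere minus P.\<close>
definition curve_homotopic :: "complex option set \<Rightarrow> complex option set \<Rightarrow> complex option set \<Rightarrow> bool" where
  "curve_homotopic P \<gamma> C \<longleftrightarrow> (\<exists>p q. simple_path p \<and> pathfinish p = pathstart p \<and> path_image p = st ` \<gamma>
      \<and> simple_path q \<and> pathfinish q = pathstart q \<and> path_image q = st ` C
      \<and> homotopic_loops (st ` (UNIV - P)) p q)"

definition non_peripheral :: "complex option set \<Rightarrow> complex option set \<Rightarrow> bool" where
  "non_peripheral P C \<longleftrightarrow> jordan_curve C \<and> C \<inter> P = {} \<and>
     (\<forall>x \<in> st ` (UNIV - C). 2 \<le> card (connected_component_set (st ` (UNIV - C)) x \<inter> st ` P))"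

definition Nint :: "complex option set \<Rightarrow> complex option set \<Rightarrow> enat" where
  "Nint \<gamma> L = (if finite (\<gamma> \<inter> L) then enat (card (\<gamma> \<inter> L)) else \<infinity>)"

definition complexity :: "complex option set \<Rightarrow> complex option set set \<Rightarrow> complex option set \<Rightarrow> enat" where
  "complexity P F0 C = (INF \<gamma> \<in> {\<gamma>. jordan_curve \<gamma> \<and> curve_homotopic P \<gamma> C}. \<Sum>L\<in>F0. Nint \<gamma> L)"

text \<open>f is a post-critically finite polynomial p with a bounded immediate super-attracting
 basin U of local degree d0, normalized by a homeomorphism phi of the plane with phi(D) = U
 so that f = phi^-1 o p o phi and f(z) = z^d0 on D; other critical orbits of p avoid U.\<close>
definition normalized_pcf_poly :: "nat \<Rightarrow> (complex \<Rightarrow> complex) \<Rightarrow> bool" where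
  "normalized_pcf_poly d0 f \<longleftrightarrow> (\<exists>(p::complex poly) \<phi> \<psi> a.
      degree p \<ge> 2 \<and> homeomorphism UNIV UNIV \<phi> \<psi> \<and> (\<forall>z. \<phi> (f z) = poly p (\<phi> z)) \<and>
      poly p a = a \<and> order a (p - [:a:]) = d0 \<and>
      (let U = connected_component_set {z. (\<lambda>n. (poly p ^^ n) z) \<longlonglongrightarrow> a} a in
         bounded U \<and> \<phi> ` ball 0 1 = U \<and>
         (\<forall>c. poly (pderiv p) c = 0 \<and> c \<notin> U \<longrightarrow> (\<forall>n. (poly p ^^ n) c \<notin> U))) \<and>
      (\<forall>z \<in> ball 0 1. f z = z ^ d0) \<and>
      finite {(poly p ^^ n) c | n c. n \<ge> 1 \<and> poly (pderiv p) c = 0})"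

definition iota :: "nat \<Rightarrow> nat \<Rightarrow> complex \<Rightarrow> complex" where
  "iota d0 k \<zeta> = cis (2 * pi * real k / real (d0 - 1)) / \<zeta>"

definition glue :: "(complex \<Rightarrow> complex) \<Rightarrow> (complex \<Rightarrow> complex) \<Rightarrow> nat \<Rightarrow> nat
                    \<Rightarrow> complex option \<Rightarrow> complex option" where
  "glue f g d0 k w = (case w of None \<Rightarrow> None
     | Some z \<Rightarrow> if cmod z \<ge> 1 then Some (f z)
                else if z = 0 then Some 0
                else if g (iota d0 k z) = 0 then None
                else Some (iota d0 k (g (iota d0 k z))))"

definition critical_points :: "(complex option \<Rightarrow> complex option) \<Rightarrow> complex option set" where
  "critical_points F = {c. \<forall>e>0. \<not> inj_on F {w. dist (st w) (st c) < e}}"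

definition postcrit :: "(complex option \<Rightarrow> complex option) \<Rightarrow> complex option set" where
  "postcrit F = {(F ^^ n) c | n c. n \<ge> 1 \<and> c \<in> critical_points F}"

definition sep_family :: "(complex option \<Rightarrow> complex option) \<Rightarrow> complex option set set \<Rightarrow> bool" where
  "sep_family F F0 \<longleftrightarrow> finite F0 \<and> bij_betw ((`) F) F0 F0 \<and>
     (\<forall>L \<in> F0. separating_arc L \<and> inj_on F L \<and> F ` L \<in> F0)"

definition preimage_component :: "(complex option \<Rightarrow> complex option) \<Rightarrow> complex option set
                                   \<Rightarrow> complex option set \<Rightarrow> bool" where
  "preimage_component F C C' \<longleftrightarrow>
     (\<exists>x \<in> F -` C. st ` C' = connected_component_set (st ` (F -` C)) (st x))"

end

theory Submission
  imports Defs "HOL-Library.Periodic_Fun"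
begin

(* Transported to the round sphere by stereographic projection, F becomes a continuous map G.
   Off the preimage of the post-critical set P there are no critical points, so G is locally
   injective there, hence open by invariance of domain; the sphere being compact, G is a covering
   with finite fibres over a clopen part of the complement of P.  A homotopy in the complement of
   P between a simple loop \<gamma> and C stays in that part, so it lifts: unrolled to a 1-periodic map
   on [0,1] \<times> \<real>, its lift is periodic with a least integer period m, and reparametrising by m
   gives homotopic simple loops \<gamma>' over \<gamma> and C' over C, the latter filling the component of
   the preimage of C through the chosen point.  As F maps \<gamma>' into \<gamma> and is injective on each
   arc L of F0, N(\<gamma>', L) \<le> N(\<gamma>, F L); summing over F0, which F permutes, gives the claim. *)

section \<open>Loops as periodic maps\<close>

lemma continuous_on_homotopy_frac:
  fixes H :: "real \<times> real \<Rightarrow> 'b::topological_space"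
  assumes contH: "continuous_on ({0..1}\<times>{0..1}) H"
    and loops: "\<And>\<tau>. \<tau> \<in> {0..1} \<Longrightarrow> H (\<tau>, 1) = H (\<tau>, 0)"
  shows "continuous_on ({0..1}\<times>UNIV) (\<lambda>(\<tau>, t). H (\<tau>, frac t))"
proof -
  have piece: "continuous_on ({0..1}\<times>{of_int k..of_int k + 1}) (\<lambda>(\<tau>, t). H (\<tau>, frac t))"
    for k :: int
  proof -
    have shift: "(\<lambda>x::real \<times> real. (fst x, snd x - of_int k)) ` ({0..1}\<times>{of_int k..of_int k + 1})
        \<subseteq> {0..1}\<times>{0..1}"
      by (auto; linarith)
    have shifted: "continuous_on ({0..1}\<times>{of_int k..of_int k + 1}) (\<lambda>x. H (fst x, snd x - of_int k))"
      by (rule continuous_on_compose2[OF contH _ shift]) (intro continuous_intros)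
    have eq: "H (\<tau>, t - of_int k) = H (\<tau>, frac t)"
      if "\<tau> \<in> {0..1}" "t \<in> {of_int k..of_int k + 1}" for \<tau> t
    proof (cases "t = of_int k + 1")
      case True
      then show ?thesis using loops[OF that(1)] by simp
    next
      case False
      then have "t - of_int k \<in> {0..<1}" using that by auto
      then have "frac t = t - of_int k"
        using frac_add_of_int_right[of "t - of_int k" k] by simp
      then show ?thesis by simp
    qed
    show ?thesis by (rule continuous_on_eq[OF shifted]) (force simp: eq)
  qed
  show ?thesis
  proof (clarsimp simp: continuous_on_eq_continuous_within)
    fix \<tau> t :: real assume "0 \<le> \<tau>" "\<tau> \<le> 1"
    define k where "k = \<lfloor>t\<rfloor>"
    have t: "of_int k - 1 < t" "t < of_int k + 1" unfolding k_def by linarith+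
    have "{0..1}\<times>{of_int (k - 1)..of_int (k - 1) + 1} \<union> {0..1}\<times>{of_int k..of_int k + 1}
        = {0..1::real}\<times>{of_int k - 1..of_int k + 1::real}"
      by auto
    then have "continuous_on ({0..1}\<times>{of_int k - 1..of_int k + 1}) (\<lambda>(\<tau>, t). H (\<tau>, frac t))"
      using continuous_on_closed_Un[OF _ _ piece piece] by (metis closed_Times closed_real_atLeastAtMost)
    then have "continuous (at (\<tau>, t) within {0..1}\<times>{of_int k - 1..of_int k + 1}) (\<lambda>(\<tau>, t). H (\<tau>, frac t))"
      using t \<open>0 \<le> \<tau>\<close> \<open>\<tau> \<le> 1\<close> by (simp add: continuous_on_eq_continuous_within)
    moreover have "at (\<tau>, t) within {0..1}\<times>{of_int k - 1..of_int k + 1} = at (\<tau>, t) within {0..1}\<times>UNIV"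
      by (rule at_within_nhd[of _ "UNIV \<times> {of_int k - 1<..<of_int k + 1}"])
         (use t in \<open>auto intro: open_Times\<close>)
    ultimately show "continuous (at (\<tau>, t) within {0..1}\<times>UNIV) (\<lambda>(\<tau>, t). H (\<tau>, frac t))"
      by simp
  qed
qed

lemma continuous_on_loop_frac:
  assumes "path c" "pathfinish c = pathstart c"
  shows "continuous_on UNIV (\<lambda>t. c (frac t))"
proof -
  have "continuous_on ({0..1}\<times>{0..1}) (c \<circ> snd)"
    using assms(1) unfolding path_def
    by (intro continuous_on_compose continuous_intros) (auto elim: continuous_on_subset)
  then have "continuous_on ({0..1}\<times>UNIV) (\<lambda>(\<tau>::real, t). c (frac t))"
    using continuous_on_homotopy_frac[of "c \<circ> snd"] assms(2)
    by (simp add: pathfinish_def pathstart_def)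
  then have "continuous_on UNIV ((\<lambda>(\<tau>::real, t). c (frac t)) \<circ> (\<lambda>t. (0, t)))"
    by (intro continuous_on_compose) (auto intro: continuous_intros elim: continuous_on_subset)
  then show ?thesis by (simp add: o_def)
qed

lemma simple_loop_frac_eq_imp_shift:
  assumes "simple_path c" "c (frac a) = c (frac b)"
  obtains j :: int where "b = a + of_int j"
proof -
  have "frac a = frac b"
    using assms frac_lt_1[of a] frac_lt_1[of b]
    unfolding simple_path_def loop_free_def by fastforce
  then have "b = a + of_int (\<lfloor>b\<rfloor> - \<lfloor>a\<rfloor>)" by (simp add: frac_def)
  then show ?thesis by (rule that)
qed

lemma loop_frac:
  assumes "pathfinish c = pathstart c" "t \<in> {0..1}"
  shows "c (frac t) = c t"
  using assms by (cases "t = 1") (auto simp: pathfinish_def pathstart_def)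

lemma path_image_loop_frac:
  assumes "pathfinish c = pathstart c"
  shows "path_image c = (\<lambda>t. c (frac t)) ` {a..a+1}" and "path_image c = range (\<lambda>t. c (frac t))"
proof -
  have "path_image c \<subseteq> (\<lambda>t. c (frac t)) ` {a..a+1}"
  proof
    fix y assume "y \<in> path_image c"
    then obtain t where t: "t \<in> {0..1}" "y = c t" by (auto simp: path_image_def)
    define u where "u = a + frac (t - a)"
    have "u = t + of_int (- \<lfloor>t - a\<rfloor>)" by (simp add: u_def frac_def)
    then have "frac u = frac t" by (simp only: frac_add_of_int_right)
    moreover have "u \<in> {a..a+1}" unfolding u_def using frac_lt_1[of "t - a"] by auto
    ultimately show "y \<in> (\<lambda>t. c (frac t)) ` {a..a+1}"
      using t loop_frac[OF assms t(1)] by force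
  qed
  moreover have "frac t \<in> {0..1}" for t
    using frac_lt_1[of t] by simp
  then have "range (\<lambda>t. c (frac t)) \<subseteq> path_image c"
    unfolding path_image_def by (auto intro!: imageI)
  ultimately show "path_image c = (\<lambda>t. c (frac t)) ` {a..a+1}"
    and "path_image c = range (\<lambda>t. c (frac t))"
    by blast+
qed

lemma periodic_lift_eq_within_period:
  fixes l :: "real \<Rightarrow> 'a" and c :: "real \<Rightarrow> 'b::topological_space" and m :: nat
  assumes c: "simple_path c" and lift: "\<And>t. G (l t) = c (frac t)"
    and minimal: "\<And>j t. 0 < j \<Longrightarrow> j < m \<Longrightarrow> l (t + real j) \<noteq> l t"
    and st: "0 \<le> s" "s \<le> t" "t \<le> real m" and eq: "l s = l t"
  shows "s = t \<or> s = 0 \<and> t = real m"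
proof -
  have "c (frac s) = c (frac t)" using eq lift by metis
  then obtain j :: int where j: "t = s + of_int j"
    using simple_loop_frac_eq_imp_shift[OF c] by blast
  then have "0 \<le> j" "j \<le> int m" using st by linarith+
  moreover have False if "j \<noteq> 0" "j \<noteq> int m"
  proof -
    have "0 < nat j" "nat j < m" using that \<open>0 \<le> j\<close> \<open>j \<le> int m\<close> by auto
    then show False using minimal[of "nat j" s] eq j \<open>0 \<le> j\<close> by simp
  qed
  ultimately consider "j = 0" | "j = int m" by blast
  then show ?thesis using j st by cases auto
qed

lemma simple_loop_of_periodic_lift:
  fixes l :: "real \<Rightarrow> 'a::topological_space" and c :: "real \<Rightarrow> 'b::topological_space"
    and G :: "'a \<Rightarrow> 'b" and m :: nat
  assumes c: "simple_path c" and contl: "continuous_on UNIV l" and lift: "\<And>t. G (l t) = c (frac t)"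
    and m: "0 < m" and period: "\<And>t. l (t + real m) = l t"
    and minimal: "\<And>j t. 0 < j \<Longrightarrow> j < m \<Longrightarrow> l (t + real j) \<noteq> l t"
  shows "simple_path (\<lambda>u. l (real m * u))"
    and "pathfinish (\<lambda>u. l (real m * u)) = pathstart (\<lambda>u. l (real m * u))"
    and "path_image (\<lambda>u. l (real m * u)) = range l"
proof -
  interpret periodic_fun_simple l "real m" by standard (rule period)
  have ends: "u = v \<or> u = 0 \<and> v = 1"
    if "u \<in> {0..1}" "v \<in> {0..1}" "u \<le> v" "l (real m * u) = l (real m * v)" for u v
    using periodic_lift_eq_within_period[where m = m and s = "real m * u" and t = "real m * v",
        OF c lift minimal] that m
    by (auto intro: mult_left_le)
  have "path (\<lambda>u. l (real m * u))"
    unfolding path_def by (rule continuous_on_compose2[OF contl]) (auto intro!: continuous_intros)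
  then show "simple_path (\<lambda>u. l (real m * u))"
    unfolding simple_path_def loop_free_def
    by (metis ends linorder_le_cases)
  show "pathfinish (\<lambda>u. l (real m * u)) = pathstart (\<lambda>u. l (real m * u))"
    using period[of 0] by (simp add: pathfinish_def pathstart_def)
  show "path_image (\<lambda>u. l (real m * u)) = range l"
  proof
    show "range l \<subseteq> path_image (\<lambda>u. l (real m * u))"
    proof clarify
      fix t
      define k where "k = \<lfloor>t / real m\<rfloor>"
      define r where "r = t - of_int k * real m"
      have "l t = l (r + of_int k * real m)" by (simp add: r_def)
      also have "\<dots> = l (real m * (r / real m))" using m by (simp add: plus_of_int)
      finally have lt: "l t = l (real m * (r / real m))" .
      have "of_int k \<le> t / real m" "t / real m < of_int k + 1"
        unfolding k_def by linarith+
      then have "of_int k * real m \<le> t" "t < (of_int k + 1) * real m"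
        using m by (simp_all add: field_simps)
      then have "r / real m \<in> {0..1}"
        using m by (auto simp: r_def field_simps)
      then show "l t \<in> path_image (\<lambda>u. l (real m * u))"
        unfolding path_image_def lt by (rule imageI)
    qed
  qed (auto simp: path_image_def)
qed

lemma openin_path_image_frac_ball:
  fixes c :: "real \<Rightarrow> 'b::t2_space"
  assumes c: "simple_path c" and loop: "pathfinish c = pathstart c" and d: "0 < d" "d \<le> 1/2"
  shows "openin (top_of_set (path_image c)) ((\<lambda>t. c (frac t)) ` ball s d)"
proof -
  define Q where "Q = (\<lambda>t. c (frac t))"
  have "continuous_on UNIV Q"
    unfolding Q_def by (rule continuous_on_loop_frac) (use c loop in \<open>auto simp: simple_path_def\<close>)
  then have "compact (Q ` {s+d..s+1-d})"
    by (rule compact_continuous_image[OF continuous_on_subset]) auto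
  then have closed_rest: "closed (Q ` {s+d..s+1-d})" by (rule compact_imp_closed)
  have "Q ` ball s d = path_image c - Q ` {s+d..s+1-d}"
  proof
    show "Q ` ball s d \<subseteq> path_image c - Q ` {s+d..s+1-d}"
    proof
      fix y assume "y \<in> Q ` ball s d"
      then obtain t where t: "t \<in> ball s d" "y = Q t" by blast
      have "y \<notin> Q ` {s+d..s+1-d}"
      proof
        assume "y \<in> Q ` {s+d..s+1-d}"
        then obtain t' where t': "t' \<in> {s+d..s+1-d}" "Q t = Q t'" using t by force
        then obtain j :: int where "t' = t + of_int j"
          using simple_loop_frac_eq_imp_shift[OF c] unfolding Q_def by metis
        then have "0 < (of_int j :: real)" "of_int j < (1 :: real)"
          using t t' by (auto simp: dist_real_def abs_less_iff)
        then have "0 < j" "j < 1" by simp_all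
        then show False by linarith
      qed
      moreover have "y \<in> path_image c"
        using path_image_loop_frac(2)[OF loop] t by (auto simp: Q_def)
      ultimately show "y \<in> path_image c - Q ` {s+d..s+1-d}" by blast
    qed
    show "path_image c - Q ` {s+d..s+1-d} \<subseteq> Q ` ball s d"
    proof clarify
      fix y assume y: "y \<in> path_image c" "y \<notin> Q ` {s+d..s+1-d}"
      then obtain t where t: "t \<in> {s-d..s-d+1}" "y = Q t"
        using path_image_loop_frac(1)[OF loop, of "s-d"] by (auto simp: Q_def)
      have "Q (s - d) = Q (s + 1 - d)"
        using frac_1_eq[of "s - d"] by (simp add: Q_def algebra_simps)
      then have "t \<noteq> s - d" "t \<notin> {s+d..s+1-d}" using t y d by auto
      then show "y \<in> Q ` ball s d" using t by (auto simp: dist_real_def)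
    qed
  qed
  then show ?thesis
    unfolding Q_def[symmetric] by (metis Diff_eq closed_rest open_Compl openin_open_Int)
qed

section \<open>Coverings from locally injective open maps\<close>

lemma connected_component_clopen:
  assumes "openin (top_of_set E) R" "closedin (top_of_set E) R" "connected R" "x \<in> R"
  shows "connected_component_set E x = R"
proof
  have "R \<subseteq> E" using assms(1) by (rule openin_imp_subset)
  then show "R \<subseteq> connected_component_set E x"
    by (rule connected_component_maximal[OF assms(4,3)])
  have "connectedin (top_of_set E) (connected_component_set E x)"
    by (simp add: connectedin_subtopology connected_component_subset)
  moreover have "\<not> disjnt (connected_component_set E x) R"
    using assms(4) \<open>R \<subseteq> E\<close> by (auto simp: disjnt_iff intro!: exI[of _ x] connected_component_refl)
  ultimately show "connected_component_set E x \<subseteq> R"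
    using connectedin_clopen_cases[OF _ assms(2,1)] by blast
qed

lemma homotopic_loops_in_clopen:
  assumes hom: "homotopic_loops B p q"
    and T: "openin (top_of_set B) T" "closedin (top_of_set B) T"
    and y: "y \<in> path_image q" "y \<in> T"
  shows "homotopic_loops T p q"
proof -
  obtain h where h: "continuous_on ({0..1::real}\<times>{0..1::real}) h" "h \<in> ({0..1}\<times>{0..1}) \<rightarrow> B"
      "\<forall>x\<in>{0..1}. h (0, x) = p x" "\<forall>x\<in>{0..1}. h (1, x) = q x"
      "\<forall>t\<in>{0..1}. pathfinish (h \<circ> Pair t) = pathstart (h \<circ> Pair t)"
    using hom unfolding homotopic_loops by blast
  have "connected (h ` ({0..1}\<times>{0..1}))"
    by (rule connected_continuous_image[OF h(1)]) (simp add: convex_connected convex_Times)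
  then have "connectedin (top_of_set B) (h ` ({0..1}\<times>{0..1}))"
    using h(2) by (auto simp: connectedin_subtopology)
  moreover obtain t where "t \<in> {0..1}" "y = h (1, t)"
    using y(1) h(4) by (auto simp: path_image_def)
  then have "y \<in> h ` ({0..1}\<times>{0..1})" by auto
  then have "\<not> disjnt (h ` ({0..1}\<times>{0..1})) T"
    using y(2) by (auto simp: disjnt_iff)
  ultimately have "h \<in> ({0..1}\<times>{0..1}) \<rightarrow> T"
    using connectedin_clopen_cases[OF _ T(2,1)] by blast
  then show ?thesis unfolding homotopic_loops using h by blast
qed

lemma finite_disjoint_balls:
  fixes \<Phi> :: "'a::metric_space set"
  assumes "finite \<Phi>" and e: "\<And>x. x \<in> \<Phi> \<Longrightarrow> 0 < e x"
  obtains r where "0 < r" "\<And>x. x \<in> \<Phi> \<Longrightarrow> r \<le> e x"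
    "pairwise (\<lambda>x x'. disjnt (ball x r) (ball x' r)) \<Phi>"
proof
  define R where "R = insert 1 (e ` \<Phi> \<union> (\<lambda>(x, x'). dist x x' / 2) ` (Sigma \<Phi> (\<lambda>x. \<Phi> - {x})))"
  have R: "finite R" "R \<noteq> {}" using \<open>finite \<Phi>\<close> by (auto simp: R_def)
  have "\<forall>u\<in>R. 0 < u" using e by (auto simp: R_def)
  then show "0 < Min R" using R by simp
  show "Min R \<le> e x" if "x \<in> \<Phi>" for x using R(1) that by (intro Min_le) (auto simp: R_def)
  show "pairwise (\<lambda>x x'. disjnt (ball x (Min R)) (ball x' (Min R))) \<Phi>"
  proof (clarsimp simp: pairwise_def disjnt_iff)
    fix x x' z assume "x \<in> \<Phi>" "x' \<in> \<Phi>" "x \<noteq> x'" "dist x z < Min R" "dist x' z < Min R"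
    moreover have "Min R \<le> dist x x' / 2" using R \<open>x \<in> \<Phi>\<close> \<open>x' \<in> \<Phi>\<close> \<open>x \<noteq> x'\<close>
      by (intro Min_le) (auto simp: R_def)
    moreover have "dist x x' \<le> dist x z + dist x' z" by (metis dist_commute dist_triangle)
    ultimately show False by linarith
  qed
qed

lemma finite_fibre_of_locally_injective:
  fixes G :: "'a::metric_space \<Rightarrow> 'b::metric_space"
  assumes "compact K" "continuous_on K G"
    and locinj: "\<And>a. a \<in> K \<Longrightarrow> G a = y \<Longrightarrow> \<exists>e>0. inj_on G (K \<inter> ball a e)"
  shows "finite (K \<inter> G -` {y})"
proof -
  define \<Phi> where "\<Phi> = K \<inter> G -` {y}"
  have "\<forall>a\<in>\<Phi>. \<exists>e>0. inj_on G (K \<inter> ball a e)" using locinj by (simp add: \<Phi>_def)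
  then obtain e where e: "\<And>a. a \<in> \<Phi> \<Longrightarrow> 0 < e a \<and> inj_on G (K \<inter> ball a (e a))"
    by metis
  have "closed {x \<in> K. G x = y}"
    by (rule continuous_closed_preimage_constant[OF assms(2) compact_imp_closed[OF assms(1)]])
  then have "compact (K \<inter> {x \<in> K. G x = y})" by (rule compact_Int_closed[OF assms(1)])
  moreover have "K \<inter> {x \<in> K. G x = y} = \<Phi>" by (auto simp: \<Phi>_def)
  moreover have cover: "\<Phi> \<subseteq> (\<Union>x\<in>\<Phi>. ball x (e x))" using e by force
  ultimately obtain D where D: "D \<subseteq> \<Phi>" "finite D" "\<Phi> \<subseteq> (\<Union>x\<in>D. ball x (e x))"
    using compactE_image[of \<Phi> \<Phi> "\<lambda>x. ball x (e x)", OF _ open_ball cover] by metis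
  have "\<Phi> \<subseteq> D"
  proof
    fix z assume z: "z \<in> \<Phi>"
    then obtain x where x: "x \<in> D" "z \<in> ball x (e x)" using D by blast
    then have "x \<in> \<Phi>" using D(1) by blast
    then have "inj_on G (K \<inter> ball x (e x))" "x \<in> K \<inter> ball x (e x)" "G x = G z"
      using e z by (auto simp: \<Phi>_def)
    moreover have "z \<in> K \<inter> ball x (e x)" using x z by (auto simp: \<Phi>_def)
    ultimately have "x = z" by (auto dest: inj_onD)
    then show "z \<in> D" using x by simp
  qed
  then show ?thesis using D(2) finite_subset unfolding \<Phi>_def by blast
qed

lemma homeomorphism_of_injective_open_map_on:
  assumes contG: "continuous_on A G"
    and open_map: "\<And>U. openin (top_of_set A) U \<Longrightarrow> openin (top_of_set B) (G ` U)"
    and u: "openin (top_of_set A) u" and inj: "inj_on G u"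
  obtains q where "homeomorphism u (G ` u) G q"
proof (rule homeomorphism_injective_open_map[OF _ refl inj])
  show "continuous_on u G" using contG openin_imp_subset[OF u] by (rule continuous_on_subset)
  fix V assume "openin (top_of_set u) V"
  then have "openin (top_of_set B) (G ` V)" using u open_map openin_trans by blast
  moreover have "G ` V \<subseteq> G ` u" using \<open>openin (top_of_set u) V\<close> openin_imp_subset by blast
  moreover have "G ` u \<subseteq> B" using open_map[OF u] openin_imp_subset by blast
  ultimately show "openin (top_of_set (G ` u)) (G ` V)" by (meson openin_subset_trans)
qed

lemma evenly_covered_by_disjoint_sheets:
  assumes contG: "continuous_on A G"
    and open_map: "\<And>U. openin (top_of_set A) U \<Longrightarrow> openin (top_of_set B) (G ` U)"
    and W: "openin (top_of_set (G ` A)) W"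
    and sheet: "\<And>x. x \<in> \<Phi> \<Longrightarrow> openin (top_of_set A) (U x) \<and> inj_on G (U x) \<and> W \<subseteq> G ` U x"
    and disj: "pairwise (\<lambda>x x'. disjnt (U x) (U x')) \<Phi>"
    and cover: "A \<inter> G -` W \<subseteq> (\<Union>x\<in>\<Phi>. U x)"
  shows "\<exists>v. \<Union>v = A \<inter> G -` W \<and> (\<forall>u\<in>v. openin (top_of_set A) u) \<and> pairwise disjnt v \<and>
             (\<forall>u\<in>v. \<exists>q. homeomorphism u W G q)"
proof -
  define v where "v = (\<lambda>x. U x \<inter> G -` W) ` \<Phi>"
  have UA: "U x \<subseteq> A" if "x \<in> \<Phi>" for x using sheet[OF that] openin_imp_subset by blast
  have preW: "openin (top_of_set A) (A \<inter> G -` W)"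
    by (rule continuous_openin_preimage[OF contG _ W]) auto
  have open_sheet: "openin (top_of_set A) (U x \<inter> G -` W)" if "x \<in> \<Phi>" for x
  proof -
    have "U x \<inter> G -` W = U x \<inter> (A \<inter> G -` W)" using UA[OF that] by blast
    then show ?thesis using sheet[OF that] preW by (metis openin_Int)
  qed
  have homeo: "\<exists>q. homeomorphism u W G q" if "u \<in> v" for u
  proof -
    obtain x where x: "x \<in> \<Phi>" "u = U x \<inter> G -` W" using \<open>u \<in> v\<close> by (auto simp: v_def)
    have "inj_on G u" using sheet[OF x(1)] x(2) by (auto intro: inj_on_subset)
    moreover have "G ` u = W" using sheet[OF x(1)] x(2) by auto
    ultimately show ?thesis
      using homeomorphism_of_injective_open_map_on[OF contG open_map open_sheet[OF x(1)]] x(2) by metis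
  qed
  have "pairwise disjnt v"
    unfolding v_def by (rule pairwise_imageI) (use disj in \<open>auto simp: pairwise_def disjnt_def\<close>)
  moreover have "\<Union>v = A \<inter> G -` W" using UA cover by (auto simp: v_def)
  ultimately show ?thesis using open_sheet homeo by (intro exI[of _ v]) (auto simp: v_def)
qed

lemma covering_space_of_locally_injective_open_map:
  fixes G :: "'a::metric_space \<Rightarrow> 'b::metric_space"
  assumes K: "compact K" and contG: "continuous_on K G" and A: "A = K \<inter> G -` B"
    and locinj: "\<And>a. a \<in> A \<Longrightarrow> \<exists>e>0. inj_on G (K \<inter> ball a e)"
    and open_map: "\<And>U. openin (top_of_set A) U \<Longrightarrow> openin (top_of_set B) (G ` U)"
  shows "covering_space A G (G ` A)"
proof
  have contA: "continuous_on A G" using contG A by (auto intro: continuous_on_subset)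
  then show "continuous_on A G" .
  show "G ` A = G ` A" ..
  fix y assume "y \<in> G ` A"
  define \<Phi> where "\<Phi> = K \<inter> G -` {y}"
  have \<Phi>A: "\<Phi> \<subseteq> A" and "\<Phi> \<noteq> {}" using \<open>y \<in> G ` A\<close> A by (auto simp: \<Phi>_def)
  have "finite \<Phi>" unfolding \<Phi>_def
    by (rule finite_fibre_of_locally_injective[OF K contG]) (use locinj \<Phi>A in \<open>auto simp: \<Phi>_def\<close>)
  obtain e where e: "\<And>a. a \<in> A \<Longrightarrow> 0 < e a \<and> inj_on G (K \<inter> ball a (e a))" using locinj by metis
  obtain r where r: "0 < r" "\<And>x. x \<in> \<Phi> \<Longrightarrow> r \<le> e x"
    and disj: "pairwise (\<lambda>x x'. disjnt (ball x r) (ball x' r)) \<Phi>"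
    using finite_disjoint_balls[OF \<open>finite \<Phi>\<close>, of e] e \<Phi>A by blast
  define U where "U x = A \<inter> ball x r" for x
  \<comment> \<open>Removing the image of the compact set Z of points away from the fibre puts every point
    of A over W into one of the balls around the fibre.\<close>
  define Z where "Z = K - (\<Union>x\<in>\<Phi>. ball x r)"
  have "compact Z" unfolding Z_def using K by (intro compact_diff open_UN) auto
  then have "closed (G ` Z)"
    using contG by (metis Diff_subset Z_def compact_continuous_image compact_imp_closed continuous_on_subset)
  then have closedGZ: "closedin (top_of_set (G ` A)) (G ` A \<inter> G ` Z)" by (simp add: closedin_closed_Int)
  have openU: "openin (top_of_set A) (U x)" for x unfolding U_def by (simp add: openin_open_Int)
  have "openin (top_of_set (G ` A)) (G ` U x)" for x
    by (rule openin_subset_trans[OF open_map[OF openU]]) (auto simp: U_def A)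
  then have "openin (top_of_set (G ` A)) (\<Inter>x\<in>\<Phi>. G ` U x)" using \<open>finite \<Phi>\<close> \<open>\<Phi> \<noteq> {}\<close> by blast
  moreover define W where "W = (\<Inter>x\<in>\<Phi>. G ` U x) - G ` Z"
  moreover have "W = (\<Inter>x\<in>\<Phi>. G ` U x) - (G ` A \<inter> G ` Z)" using \<open>\<Phi> \<noteq> {}\<close> by (auto simp: W_def U_def)
  ultimately have openW: "openin (top_of_set (G ` A)) W" using closedGZ by (metis openin_diff)
  have "y \<in> G ` U x" if "x \<in> \<Phi>" for x using that \<Phi>A r(1) by (auto simp: U_def \<Phi>_def)
  moreover have "y \<notin> G ` Z" using r(1) by (auto simp: Z_def \<Phi>_def)
  ultimately have "y \<in> W" by (auto simp: W_def)
  have "U x \<subseteq> K \<inter> ball x (e x)" if "x \<in> \<Phi>" for x using r(2)[OF that] A by (auto simp: U_def)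
  then have injU: "inj_on G (U x)" if "x \<in> \<Phi>" for x using that e \<Phi>A by (meson inj_on_subset subsetD)
  have WU: "W \<subseteq> G ` U x" if "x \<in> \<Phi>" for x using that by (auto simp: W_def)
  have cover: "A \<inter> G -` W \<subseteq> (\<Union>x\<in>\<Phi>. U x)" using A by (auto simp: W_def Z_def U_def)
  have disjU: "pairwise (\<lambda>x x'. disjnt (U x) (U x')) \<Phi>"
    using disj by (auto simp: pairwise_def disjnt_def U_def)
  have sheet: "openin (top_of_set A) (U x) \<and> inj_on G (U x) \<and> W \<subseteq> G ` U x" if "x \<in> \<Phi>" for x
    by (simp add: openU injU[OF that] WU[OF that])
  show "\<exists>T. y \<in> T \<and> openin (top_of_set (G ` A)) T \<and>
     (\<exists>v. \<Union>v = A \<inter> G -` T \<and> (\<forall>u\<in>v. openin (top_of_set A) u) \<and> pairwise disjnt v \<and>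
          (\<forall>u\<in>v. \<exists>q. homeomorphism u T G q))"
  proof (intro exI[of _ W] conjI)
    show "y \<in> W" "openin (top_of_set (G ` A)) W" by fact+
    show "\<exists>v. \<Union>v = A \<inter> G -` W \<and> (\<forall>u\<in>v. openin (top_of_set A) u) \<and> pairwise disjnt v \<and>
            (\<forall>u\<in>v. \<exists>q. homeomorphism u W G q)"
      by (rule evenly_covered_by_disjoint_sheets[OF contA open_map openW sheet disjU cover])
  qed
qed

section \<open>Lifting homotopies of simple loops\<close>

lemma covering_space_lift_shift_eq:
  fixes G :: "'a::real_normed_vector \<Rightarrow> 'b::real_normed_vector"
    and K :: "'c::topological_space \<times> real \<Rightarrow> 'b"
  assumes cov: "covering_space A G T" and S: "connected S"
    and contK: "continuous_on (S \<times> UNIV) K" and KT: "K \<in> (S \<times> UNIV) \<rightarrow> T"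
    and Kper: "\<And>s t. s \<in> S \<Longrightarrow> K (s, t + c) = K (s, t)"
    and contL: "continuous_on (S \<times> UNIV) L" and LA: "L \<in> (S \<times> UNIV) \<rightarrow> A"
    and lift: "\<And>y. y \<in> S \<times> UNIV \<Longrightarrow> G (L y) = K y"
    and a: "a \<in> S" "L (a, t + c) = L (a, t)" and b: "b \<in> S"
  shows "L (b, u + c) = L (b, u)"
proof -
  define Lc where "Lc y = L (fst y, snd y + c)" for y
  have sh: "(\<lambda>y. (fst y, snd y + c)) ` (S \<times> UNIV) \<subseteq> S \<times> UNIV" by auto
  have "continuous_on (S \<times> UNIV) Lc"
    unfolding Lc_def by (rule continuous_on_compose2[OF contL _ sh]) (intro continuous_intros)
  moreover have "Lc \<in> (S \<times> UNIV) \<rightarrow> A" "\<And>y. y \<in> S \<times> UNIV \<Longrightarrow> K y = G (Lc y)"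
    using LA lift sh Kper by (auto simp: Lc_def)
  moreover have "\<And>y. y \<in> S \<times> UNIV \<Longrightarrow> K y = G (L y)" using lift by simp
  moreover have "Lc (a, t) = L (a, t)" using a(2) by (simp add: Lc_def)
  ultimately have "Lc (b, u) = L (b, u)"
    using covering_space_lift_unique[OF cov _ contK KT _ _ _ contL LA _ connected_Times[OF S connected_UNIV]]
      a(1) b by blast
  then show ?thesis by (simp add: Lc_def)
qed

(* The homotopy, unrolled to a 1-periodic map on [0,1] \<times> \<real>, lifts; finiteness of the fibres
   forces some integer shift to fix the lift, and m is the least such shift. *)
lemma covering_space_lift_periodic_homotopy:
  fixes G :: "'a::real_normed_vector \<Rightarrow> 'b::real_normed_vector" and H :: "real \<times> real \<Rightarrow> 'b"
  assumes cov: "covering_space A G T"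
    and fibres: "\<And>y. y \<in> T \<Longrightarrow> finite (A \<inter> G -` {y})"
    and contH: "continuous_on ({0..1}\<times>{0..1}) H" and HT: "H \<in> ({0..1}\<times>{0..1}) \<rightarrow> T"
    and loops: "\<And>\<tau>. \<tau> \<in> {0..1} \<Longrightarrow> H (\<tau>, 1) = H (\<tau>, 0)"
    and x: "x \<in> A" "G x = H (1, t0)" "t0 \<in> {0..1}"
  obtains L m where "continuous_on ({0..1}\<times>UNIV) L" "L \<in> ({0..1}\<times>UNIV) \<rightarrow> A" "L (1, t0) = x"
    "\<And>\<tau> t. \<tau> \<in> {0..1} \<Longrightarrow> G (L (\<tau>, t)) = H (\<tau>, frac t)"
    "0 < m" "\<And>\<tau> t. \<tau> \<in> {0..1} \<Longrightarrow> L (\<tau>, t + real m) = L (\<tau>, t)"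
    "\<And>\<tau> t j. \<tau> \<in> {0..1} \<Longrightarrow> 0 < j \<Longrightarrow> j < m \<Longrightarrow> L (\<tau>, t + real j) \<noteq> L (\<tau>, t)"
proof -
  define D where "D = {0..1::real} \<times> (UNIV::real set)"
  define K where "K = (\<lambda>(\<tau>, t). H (\<tau>, frac t))"
  have contK: "continuous_on D K"
    unfolding D_def K_def by (rule continuous_on_homotopy_frac[OF contH loops])
  have KT: "K \<in> D \<rightarrow> T"
  proof
    fix y assume "y \<in> D"
    then have "(fst y, frac (snd y)) \<in> {0..1}\<times>{0..1}" using frac_lt_1[of "snd y"] by (auto simp: D_def)
    then show "K y \<in> T" using HT by (auto simp: K_def case_prod_beta)
  qed
  have Kper: "K (\<tau>, t + real n) = K (\<tau>, t)" for \<tau> t n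
    using frac_add_of_int_right[of t "int n"] by (simp add: K_def)
  have "K (1, t0) = G x" using x loops[of 1] by (cases "t0 = 1") (auto simp: K_def)
  moreover have "convex D" unfolding D_def by (intro convex_Times) auto
  moreover have "(1, t0) \<in> D" by (simp add: D_def)
  ultimately obtain L where L: "continuous_on D L" "L \<in> D \<rightarrow> A" "L (1, t0) = x"
    "\<And>y. y \<in> D \<Longrightarrow> G (L y) = K y"
    using covering_space_lift_strong[OF cov x(1) _ convex_imp_simply_connected
        convex_imp_locally_path_connected contK KT] by metis
  have shift: "L (\<tau>', t' + real n) = L (\<tau>', t')"
    if "\<tau> \<in> {0..1}" "L (\<tau>, t + real n) = L (\<tau>, t)" "\<tau>' \<in> {0..1}" for \<tau> t \<tau>' t' n
    using covering_space_lift_shift_eq[OF cov _ _ _ _ _ _ _ that] contK KT Kper L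
    unfolding D_def by auto
  define fibre where "fibre = A \<inter> G -` {G x}"
  have "G x \<in> T" using x HT by force
  then have "finite fibre" unfolding fibre_def by (rule fibres)
  moreover have "range (\<lambda>n. L (1, t0 + real n)) \<subseteq> fibre"
    using L(2,4) Kper[of 1 t0] \<open>K (1, t0) = G x\<close> by (auto simp: fibre_def D_def)
  ultimately have "\<not> inj (\<lambda>n. L (1, t0 + real n))" using range_inj_infinite finite_subset by blast
  then obtain a b where "a < b" "L (1, t0 + real a) = L (1, t0 + real b)"
    unfolding inj_def by (metis linorder_neqE_nat)
  then have "L (1, t0 + real (b - a)) = L (1, t0)"
    using shift[of 1 "t0 + real a" "b - a" 1 t0] by (simp add: algebra_simps)
  then have ex: "\<exists>n. 0 < n \<and> L (1, t0 + real n) = L (1, t0)"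
    using \<open>a < b\<close> by (intro exI[of _ "b - a"]) simp
  define m where "m = (LEAST n. 0 < n \<and> L (1, t0 + real n) = L (1, t0))"
  have m: "0 < m" "L (1, t0 + real m) = L (1, t0)"
    unfolding m_def using LeastI_ex[OF ex] by auto
  show thesis
  proof (rule that)
    show "L (\<tau>, t + real m) = L (\<tau>, t)" if "\<tau> \<in> {0..1}" for \<tau> t
      using shift[of 1 t0 m \<tau> t] m that by simp
    show "L (\<tau>, t + real j) \<noteq> L (\<tau>, t)" if "\<tau> \<in> {0..1}" "0 < j" "j < m" for \<tau> t j
    proof
      assume "L (\<tau>, t + real j) = L (\<tau>, t)"
      then have "L (1, t0 + real j) = L (1, t0)" using shift[of \<tau> t j 1 t0] that by simp
      then have "m \<le> j" unfolding m_def using that by (intro Least_le) simp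
      then show False using that by simp
    qed
  qed (use L m in \<open>auto simp: D_def K_def\<close>)
qed

lemma openin_range_lift:
  fixes G :: "'a::real_normed_vector \<Rightarrow> 'b::real_normed_vector" and q :: "real \<Rightarrow> 'b"
  assumes cov: "covering_space A G T"
    and q: "simple_path q" "pathfinish q = pathstart q"
    and contl: "continuous_on UNIV l" and lA: "range l \<subseteq> A" and lift: "\<And>t. G (l t) = q (frac t)"
  shows "openin (top_of_set (A \<inter> G -` path_image q)) (range l)"
proof (rule openin_subopen[THEN iffD2], clarify)
  fix s
  define E where "E = A \<inter> G -` path_image q"
  obtain T0 u \<phi> where T0: "l s \<in> T0" "openin (top_of_set A) T0" "homeomorphism T0 u G \<phi>"
    using covering_space_local_homeomorphism[OF cov] lA by (metis rangeI subsetD)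
  have injT0: "inj_on G T0" using T0(3) by (metis homeomorphism_def inj_on_inverseI)
  obtain Ob where Ob: "open Ob" "T0 = A \<inter> Ob" using T0(2) openin_open by metis
  have "open (l -` Ob)" using continuous_on_open_vimage[OF open_UNIV] contl Ob(1) by auto
  moreover have "s \<in> l -` Ob" using T0(1) Ob by auto
  ultimately obtain d' where "0 < d'" "ball s d' \<subseteq> l -` Ob" by (meson openE)
  define d where "d = min d' (1/2)"
  have d: "0 < d" "d \<le> 1/2" "ball s d \<subseteq> l -` Ob"
    using \<open>0 < d'\<close> \<open>ball s d' \<subseteq> l -` Ob\<close> by (auto simp: d_def)
  have "openin (top_of_set (path_image q)) ((\<lambda>t. q (frac t)) ` ball s d)"
    by (rule openin_path_image_frac_ball[OF q d(1,2)])
  then obtain Ob2 where Ob2: "open Ob2" "(\<lambda>t. q (frac t)) ` ball s d = path_image q \<inter> Ob2"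
    using openin_open by metis
  \<comment> \<open>G is injective on the sheet T0, so a point of T0 over the arc around q (frac s) is
    the value of l at the corresponding parameter.\<close>
  define W where "W = T0 \<inter> G -` ((\<lambda>t. q (frac t)) ` ball s d)"
  have "W = (E \<inter> G -` Ob2) \<inter> (E \<inter> Ob)" using Ob Ob2 by (auto simp: W_def E_def)
  moreover have "continuous_on E G"
    using covering_space_imp_continuous[OF cov] by (rule continuous_on_subset) (auto simp: E_def)
  ultimately have "openin (top_of_set E) W"
    using Ob(1) Ob2(1) by (metis continuous_openin_preimage_gen openin_Int openin_open_Int)
  moreover have "l s \<in> W" using T0(1) lift d(1) by (auto simp: W_def)
  moreover have "W \<subseteq> range l"
  proof
    fix z assume "z \<in> W"
    then obtain t where t: "t \<in> ball s d" "G z = q (frac t)" "z \<in> T0" by (auto simp: W_def)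
    then have "l t \<in> T0" using d(3) Ob lA by auto
    then have "z = l t" using injT0 t lift by (metis inj_onD)
    then show "z \<in> range l" by simp
  qed
  ultimately show "\<exists>W. openin (top_of_set (A \<inter> G -` path_image q)) W \<and> l s \<in> W \<and> W \<subseteq> range l"
    unfolding E_def by blast
qed

lemma range_lift_eq_connected_component:
  fixes G :: "'a::real_normed_vector \<Rightarrow> 'b::real_normed_vector" and q :: "real \<Rightarrow> 'b"
  assumes cov: "covering_space A G T"
    and q: "simple_path q" "pathfinish q = pathstart q"
    and contl: "continuous_on UNIV l" and lA: "range l \<subseteq> A" and lift: "\<And>t. G (l t) = q (frac t)"
    and "compact (range l)"
  shows "connected_component_set (A \<inter> G -` path_image q) (l s) = range l"
proof (rule connected_component_clopen)
  show "openin (top_of_set (A \<inter> G -` path_image q)) (range l)"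
    by (rule openin_range_lift[OF cov q contl lA lift])
  have "range l \<subseteq> A \<inter> G -` path_image q"
    using lA lift path_image_loop_frac(2)[OF q(2)] by auto
  then show "closedin (top_of_set (A \<inter> G -` path_image q)) (range l)"
    using compact_imp_closed[OF \<open>compact (range l)\<close>] by (metis closedin_closed_Int inf.absorb2)
  show "connected (range l)" by (rule connected_continuous_image[OF contl connected_UNIV])
qed simp

lemma covering_space_lift_homotopic_simple_loops:
  fixes G :: "'a::real_normed_vector \<Rightarrow> 'b::real_normed_vector"
  assumes cov: "covering_space A G T" and fibres: "\<And>y. y \<in> T \<Longrightarrow> finite (A \<inter> G -` {y})"
    and p: "simple_path p" and q: "simple_path q" and hom: "homotopic_loops T p q"
    and x: "x \<in> A" "G x \<in> path_image q"
  obtains p' q' where "simple_path p'" "pathfinish p' = pathstart p'" "G ` path_image p' \<subseteq> path_image p"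
    "simple_path q'" "pathfinish q' = pathstart q'"
    "path_image q' = connected_component_set (A \<inter> G -` path_image q) x"
    "homotopic_loops A p' q'"
proof -
  obtain H where H: "continuous_on ({0..1::real}\<times>{0..1::real}) H" "H \<in> ({0..1}\<times>{0..1}) \<rightarrow> T"
      "\<forall>t\<in>{0..1}. H (0, t) = p t" "\<forall>t\<in>{0..1}. H (1, t) = q t"
      "\<forall>\<tau>\<in>{0..1}. pathfinish (H \<circ> Pair \<tau>) = pathstart (H \<circ> Pair \<tau>)"
    using hom unfolding homotopic_loops by blast
  have loops: "H (\<tau>, 1) = H (\<tau>, 0)" if "\<tau> \<in> {0..1}" for \<tau>
    using H(5) that by (auto simp: pathfinish_def pathstart_def)
  have q_loop: "pathfinish q = pathstart q" using homotopic_loops_imp_loop[OF hom] by simp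
  obtain t0 where t0: "t0 \<in> {0..1}" "G x = H (1, t0)"
    using x(2) H(4) by (auto simp: path_image_def)
  obtain L m where L: "continuous_on ({0..1}\<times>UNIV) L" "L \<in> ({0..1}\<times>UNIV) \<rightarrow> A" "L (1, t0) = x"
      "\<And>\<tau> t. \<tau> \<in> {0..1} \<Longrightarrow> G (L (\<tau>, t)) = H (\<tau>, frac t)"
    and m: "0 < m" "\<And>\<tau> t. \<tau> \<in> {0..1} \<Longrightarrow> L (\<tau>, t + real m) = L (\<tau>, t)"
      "\<And>\<tau> t j. \<tau> \<in> {0..1} \<Longrightarrow> 0 < j \<Longrightarrow> j < m \<Longrightarrow> L (\<tau>, t + real j) \<noteq> L (\<tau>, t)"
    using covering_space_lift_periodic_homotopy[OF cov fibres H(1,2) loops x(1) t0(2,1)] by blast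
  have slice: "continuous_on UNIV (\<lambda>t. L (\<tau>, t))" "\<And>t. L (\<tau>, t + real m) = L (\<tau>, t)"
    "\<And>j t. 0 < j \<Longrightarrow> j < m \<Longrightarrow> L (\<tau>, t + real j) \<noteq> L (\<tau>, t)" if "\<tau> \<in> {0..1}" for \<tau>
    using m(2,3) that by (auto intro!: continuous_on_compose2[OF L(1)] continuous_intros)
  note slice0 = slice[of 0, simplified] and slice1 = slice[of 1, simplified]
  have frac01: "frac t \<in> {0..1}" for t using frac_lt_1[of t] by simp
  have lifts: "G (L (0, t)) = p (frac t)" "G (L (1, t)) = q (frac t)" for t
    using L(4)[of 0 t] L(4)[of 1 t] H(3)[rule_format, OF frac01[of t]] H(4)[rule_format, OF frac01[of t]]
    by simp_all
  note lift_p = simple_loop_of_periodic_lift[OF p slice0(1) lifts(1) m(1) slice0(2,3)]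
  note lift_q = simple_loop_of_periodic_lift[OF q slice1(1) lifts(2) m(1) slice1(2,3)]
  have "range (\<lambda>t. L (1, t)) \<subseteq> A" using L(2) by auto
  then have "connected_component_set (A \<inter> G -` path_image q) x = range (\<lambda>t. L (1, t))"
    using range_lift_eq_connected_component[OF cov q q_loop slice1(1) _ lifts(2), of t0] L(3)
      compact_simple_path_image[OF lift_q(1)] lift_q(3) by simp
  moreover have "homotopic_loops A (\<lambda>u. L (0, real m * u)) (\<lambda>u. L (1, real m * u))"
    unfolding homotopic_loops
  proof (intro exI[of _ "\<lambda>z. L (fst z, real m * snd z)"] conjI ballI)
    have sh: "(\<lambda>z. (fst z, real m * snd z)) ` ({0..1}\<times>{0..1}) \<subseteq> {0..1}\<times>UNIV" by auto
    show "continuous_on ({0..1}\<times>{0..1}) (\<lambda>z. L (fst z, real m * snd z))"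
      by (rule continuous_on_compose2[OF L(1) _ sh]) (intro continuous_intros)
    show "(\<lambda>z. L (fst z, real m * snd z)) \<in> {0..1}\<times>{0..1} \<rightarrow> A" using L(2) sh by auto
  qed (use m(2)[of _ 0] in \<open>auto simp: pathfinish_def pathstart_def\<close>)
  moreover have "G ` path_image (\<lambda>u. L (0, real m * u)) \<subseteq> path_image p"
    using lift_p(3) lifts(1) path_image_loop_frac(2)[of p] homotopic_loops_imp_loop[OF hom]
    by auto
  ultimately show thesis using lift_p lift_q by (intro that) auto
qed

section \<open>Stereographic projection\<close>

abbreviation S2 :: "(real \<times> real \<times> real) set" where
  "S2 \<equiv> sphere 0 1"

definition st_inv :: "real \<times> real \<times> real \<Rightarrow> complex option" where
  "st_inv s = (if snd (snd s) = 1 then None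
     else Some (Complex (fst s / (1 - snd (snd s))) (fst (snd s) / (1 - snd (snd s)))))"

lemma mem_S2_iff: "(a, b, c) \<in> S2 \<longleftrightarrow> a^2 + b^2 + c^2 = 1"
  by (simp add: norm_Pair add.assoc)

lemma st_Some: "st (Some z) = (2 * Re z / ((cmod z)^2 + 1), 2 * Im z / ((cmod z)^2 + 1),
    ((cmod z)^2 - 1) / ((cmod z)^2 + 1))"
  and st_None: "st None = (0, 0, 1)"
  by (simp_all add: st_def)

lemma cmod_sq_plus_1_pos [simp]: "0 < (cmod z)^2 + 1"
  and cmod_sq_plus_1_neq_0 [simp]: "(cmod z)^2 + 1 \<noteq> 0"
  by (simp_all add: add_nonneg_pos add_nonneg_eq_0_iff)

lemma st_Some_sq_components:
  "(2 * Re z / ((cmod z)^2 + 1))^2 + (2 * Im z / ((cmod z)^2 + 1))^2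
     = 4 * (cmod z)^2 / ((cmod z)^2 + 1)^2"
  by (simp add: cmod_power2 power_divide power_mult_distrib add_divide_distrib[symmetric] algebra_simps)

lemma st_in_S2: "st w \<in> S2"
proof (cases w)
  case (Some z)
  define r where "r = (cmod z)^2"
  have "0 < r + 1" by (simp add: r_def)
  have "4 * r / (r + 1)^2 + ((r - 1) / (r + 1))^2 = (4 * r + (r - 1)^2) / (r + 1)^2"
    by (simp add: power_divide add_divide_distrib)
  also have "4 * r + (r - 1)^2 = (r + 1)^2" by algebra
  finally show ?thesis
    using st_Some_sq_components[of z] \<open>0 < r + 1\<close>
    unfolding Some st_Some mem_S2_iff r_def[symmetric] by simp
qed (simp add: st_None mem_S2_iff)

lemma st_inv_st [simp]: "st_inv (st w) = w"
proof (cases w)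
  case (Some z)
  define r where "r = (cmod z)^2"
  have "0 < r + 1" by (simp add: r_def)
  then have "(r - 1) / (r + 1) \<noteq> 1" "1 - (r - 1) / (r + 1) = 2 / (r + 1)"
    by (simp_all add: field_simps)
  then show ?thesis using \<open>0 < r + 1\<close>
    unfolding Some st_Some st_inv_def r_def[symmetric] by (simp add: complex_eq_iff)
qed (simp add: st_None st_inv_def)

lemma inj_st: "inj st"
  by (metis injI st_inv_st)

lemma st_eq_iff [simp]: "st v = st w \<longleftrightarrow> v = w"
  using inj_st by (auto dest: injD)

lemma st_st_inv:
  assumes "s \<in> S2"
  shows "st (st_inv s) = s"
proof -
  obtain a b c where s: "s = (a, b, c)" by (cases s) auto
  have abc: "a^2 + b^2 + c^2 = 1" using assms s mem_S2_iff by simp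
  show ?thesis
  proof (cases "c = 1")
    case True
    then have "a = 0" "b = 0" using abc by (simp_all add: sum_power2_eq_zero_iff)
    then show ?thesis using True s by (simp add: st_inv_def st_None)
  next
    case False
    then have c: "0 < 1 - c" using abc by (smt (verit) power2_le_imp_le zero_le_power2 one_power2)
    define z where "z = Complex (a / (1 - c)) (b / (1 - c))"
    have "(cmod z)^2 = (a^2 + b^2) / (1 - c)^2"
      by (simp add: z_def cmod_power2 power_divide add_divide_distrib)
    also have "\<dots> = ((1 + c) * (1 - c)) / ((1 - c) * (1 - c))"
      using abc by (simp add: algebra_simps power2_eq_square)
    finally have nz: "(cmod z)^2 = (1 + c) / (1 - c)" using c by simp
    have n1: "(cmod z)^2 + 1 = 2 / (1 - c)" and n2: "(cmod z)^2 - 1 = 2 * c / (1 - c)"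
      unfolding nz using c by (simp_all add: field_simps)
    have "st (Some z) = (a, b, c)" unfolding st_Some n1 n2 using c by (simp add: z_def field_simps)
    then show ?thesis using False s by (simp add: st_inv_def z_def)
  qed
qed

lemma range_st: "range st = S2"
  using st_in_S2 st_st_inv by (metis image_subset_iff image_eqI subsetI subset_antisym UNIV_I)

lemma dist_st_None: "dist (st (Some z)) (st None) = 2 / sqrt ((cmod z)^2 + 1)"
proof -
  define r where "r = (cmod z)^2"
  have r: "0 < r + 1" by (simp add: r_def)
  have "(dist (st (Some z)) (st None))^2
      = (2 * Re z / (r + 1))^2 + (2 * Im z / (r + 1))^2 + ((r - 1) / (r + 1) - 1)^2"
    by (simp add: st_Some st_None dist_norm norm_Pair r_def power_divide power2_commute)
  also have "\<dots> = 4 * r / (r + 1)^2 + (- 2 / (r + 1))^2"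
    using st_Some_sq_components[of z] r by (simp add: r_def field_simps)
  also have "\<dots> = (4 * r + 4) / (r + 1)^2"
    by (simp add: power_divide add_divide_distrib)
  also have "\<dots> = 4 * (r + 1) / ((r + 1) * (r + 1))"
    by (simp add: power2_eq_square algebra_simps)
  also have "\<dots> = 4 / (r + 1)"
    using r by (metis less_irrefl mult.commute mult_divide_mult_cancel_left_if times_divide_eq_right)
  finally have "(dist (st (Some z)) (st None))^2 = 4 / (r + 1)" .
  then have "dist (st (Some z)) (st None) = sqrt (4 / (r + 1))" by (simp add: real_sqrt_unique)
  then show ?thesis by (simp add: r_def real_sqrt_divide)
qed

section \<open>The glued map on the sphere\<close>

definition sphere_map :: "(complex option \<Rightarrow> complex option) \<Rightarrow> real \<times> real \<times> real \<Rightarrow> real \<times> real \<times> real"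
  where "sphere_map F s = st (F (st_inv s))"

lemma sphere_map_st [simp]: "sphere_map F (st w) = st (F w)"
  by (simp add: sphere_map_def)

definition plane_of_S2 :: "real \<times> real \<times> real \<Rightarrow> complex" where
  "plane_of_S2 s = of_real (fst s / (1 - snd (snd s))) + \<i> * of_real (fst (snd s) / (1 - snd (snd s)))"

lemma st_inv_eq_Some: "snd (snd s) \<noteq> 1 \<Longrightarrow> st_inv s = Some (plane_of_S2 s)"
  by (simp add: st_inv_def plane_of_S2_def Complex_eq)

lemma continuous_on_plane_of_S2: "continuous_on {s. snd (snd s) \<noteq> 1} plane_of_S2"
  unfolding plane_of_S2_def by (intro continuous_intros) auto

lemma S2_not_north: "s \<in> S2 \<Longrightarrow> s \<noteq> st None \<Longrightarrow> snd (snd s) \<noteq> 1"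
  by (metis st_inv_def st_st_inv)

lemma dist_st_None_less_iff:
  assumes "0 \<le> r"
  shows "dist (st (Some z)) (st None) < 2 / sqrt (r^2 + 1) \<longleftrightarrow> r < cmod z"
proof -
  have "0 < sqrt (r^2 + 1)" "0 < sqrt ((cmod z)^2 + 1)" by (simp_all add: add_nonneg_pos)
  then have "2 / sqrt ((cmod z)^2 + 1) < 2 / sqrt (r^2 + 1) \<longleftrightarrow> sqrt (r^2 + 1) < sqrt ((cmod z)^2 + 1)"
    by (simp add: field_simps)
  also have "\<dots> \<longleftrightarrow> r^2 < (cmod z)^2" by simp
  also have "\<dots> \<longleftrightarrow> r < cmod z"
    using assms power2_less_imp_less[of r "cmod z"] power_strict_mono[of r "cmod z" 2] by auto
  finally show ?thesis by (simp add: dist_st_None)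
qed

lemma continuous_at_north_sphere_map_option:
  assumes h: "filterlim h at_infinity at_infinity"
  shows "continuous (at (st None) within S2) (sphere_map (map_option h))"
  unfolding continuous_within_eps_delta
proof (intro allI impI)
  fix e :: real assume "0 < e"
  define B where "B = 2 / e"
  have "2 / e < sqrt (B^2 + 1)" unfolding B_def by (simp add: real_less_rsqrt)
  then have "2 < e * sqrt (B^2 + 1)" using \<open>0 < e\<close> by (simp add: field_simps)
  moreover have "0 < sqrt (B^2 + 1)" by (simp add: add_nonneg_pos)
  ultimately have B: "0 \<le> B" "2 / sqrt (B^2 + 1) < e"
    using \<open>0 < e\<close> by (simp_all add: B_def pos_divide_less_eq mult.commute)
  have "eventually (\<lambda>z. B + 1 \<le> cmod (h z)) at_infinity"
    using h B(1) by (simp add: filterlim_at_infinity[of 0])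
  then obtain R where R: "\<And>z. R \<le> cmod z \<Longrightarrow> B < cmod (h z)"
    unfolding eventually_at_infinity by (metis less_add_one order_less_le_trans)
  define R' where "R' = max R 0"
  show "\<exists>d>0. \<forall>s\<in>S2. dist s (st None) < d \<longrightarrow>
          dist (sphere_map (map_option h) s) (sphere_map (map_option h) (st None)) < e"
  proof (intro exI[of _ "2 / sqrt (R'^2 + 1)"] conjI ballI impI)
    fix s assume s: "s \<in> S2" "dist s (st None) < 2 / sqrt (R'^2 + 1)"
    show "dist (sphere_map (map_option h) s) (sphere_map (map_option h) (st None)) < e"
    proof (cases "st_inv s")
      case None
      then show ?thesis using st_st_inv[OF s(1)] \<open>0 < e\<close> by force
    next
      case (Some z)
      then have "s = st (Some z)" using st_st_inv[OF s(1)] by simp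
      moreover have "0 \<le> R'" by (simp add: R'_def)
      ultimately have "R' < cmod z" using s(2) dist_st_None_less_iff by simp
      then have "B < cmod (h z)" using R[of z] by (simp add: R'_def)
      then have "dist (st (Some (h z))) (st None) < 2 / sqrt (B^2 + 1)"
        using dist_st_None_less_iff[OF B(1)] by simp
      moreover have "dist (sphere_map (map_option h) s) (sphere_map (map_option h) (st None))
          = dist (st (Some (h z))) (st None)"
        using \<open>s = st (Some z)\<close> by simp
      ultimately show ?thesis using B(2) by linarith
    qed
  qed (simp add: add_nonneg_pos)
qed

lemma continuous_on_sphere_map_option:
  assumes cont: "continuous_on UNIV h" and h: "filterlim h at_infinity at_infinity"
  shows "continuous_on S2 (sphere_map (map_option h))"
  unfolding continuous_on_eq_continuous_within
proof
  fix s assume s: "s \<in> S2"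
  show "continuous (at s within S2) (sphere_map (map_option h))"
  proof (cases "s = st None")
    case True
    then show ?thesis using continuous_at_north_sphere_map_option[OF h] by simp
  next
    case False
    have "continuous_on (S2 - {st None}) plane_of_S2"
      by (rule continuous_on_subset[OF continuous_on_plane_of_S2]) (use S2_not_north in blast)
    then have "continuous_on (S2 - {st None}) (\<lambda>x. h (plane_of_S2 x))"
      by (rule continuous_on_compose2[OF cont]) simp
    moreover have "continuous_on UNIV (\<lambda>z. st (Some z))"
      unfolding st_Some by (intro continuous_intros) auto
    ultimately have "continuous_on (S2 - {st None}) (\<lambda>x. st (Some (h (plane_of_S2 x))))"
      using continuous_on_compose2[of UNIV "\<lambda>z. st (Some z)" "S2 - {st None}" "\<lambda>x. h (plane_of_S2 x)"]
      by simp
    moreover have "st (Some (h (plane_of_S2 x))) = sphere_map (map_option h) x"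
      if "x \<in> S2 - {st None}" for x
      using that S2_not_north[of x] by (simp add: sphere_map_def st_inv_eq_Some)
    ultimately have "continuous_on (S2 - {st None}) (sphere_map (map_option h))"
      by (rule continuous_on_eq)
    then have "continuous (at s within S2 - {st None}) (sphere_map (map_option h))"
      using s False continuous_on_eq_continuous_within by blast
    moreover have "at s within S2 - {st None} = at s within S2"
      by (rule at_within_nhd[of _ "- {st None}"]) (use False in auto)
    ultimately show ?thesis by simp
  qed
qed

definition recip_rot :: "complex \<Rightarrow> complex option \<Rightarrow> complex option" where
  "recip_rot w v = (case v of None \<Rightarrow> Some 0 | Some z \<Rightarrow> if z = 0 then None else Some (w / z))"

(* For cmod w = 1 the map \<zeta> \<mapsto> w / \<zeta> of the Riemann sphere is, in stereographic coordinates,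
   the rotation (a + \<i> b, c) \<mapsto> (w (a - \<i> b), -c). *)
definition sphere_recip_rot :: "complex \<Rightarrow> real \<times> real \<times> real \<Rightarrow> real \<times> real \<times> real" where
  "sphere_recip_rot w s = (Re (w * (of_real (fst s) - \<i> * of_real (fst (snd s)))),
     Im (w * (of_real (fst s) - \<i> * of_real (fst (snd s)))), - snd (snd s))"

lemma continuous_on_sphere_recip_rot: "continuous_on A (sphere_recip_rot w)"
  unfolding sphere_recip_rot_def by (intro continuous_intros)

lemma st_recip_rot:
  assumes w: "cmod w = 1"
  shows "st (recip_rot w v) = sphere_recip_rot w (st v)"
proof (cases v)
  case (Some z)
  show ?thesis
  proof (cases "z = 0")
    case False
    define r where "r = (cmod z)^2"
    have r: "0 < r" using False by (simp add: r_def)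
    have wz: "w / z = (w * cnj z) / of_real r" by (simp add: r_def complex_div_cnj[of w z])
    have "2 * (X / r) / (1 / r + 1) = 2 / (r + 1) * X" for X
      using r by (simp add: field_simps)
    then have "2 * Re (w / z) / (1 / r + 1) = 2 / (r + 1) * Re (w * cnj z)"
      and "2 * Im (w / z) / (1 / r + 1) = 2 / (r + 1) * Im (w * cnj z)"
      unfolding wz Re_divide_of_real Im_divide_of_real by blast+
    moreover have "(cmod (w / z))^2 = 1 / r" using w by (simp add: r_def norm_divide power_divide)
    moreover have "(1 / r - 1) / (1 / r + 1) = ((1 - r) / r) / ((1 + r) / r)"
      using r by (simp add: field_simps)
    then have "(1 / r - 1) / (1 / r + 1) = - ((r - 1) / (r + 1))"
      using r by (simp add: minus_divide_left add.commute)
    ultimately have "st (recip_rot w v)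
        = (2 / (r + 1) * Re (w * cnj z), 2 / (r + 1) * Im (w * cnj z), - ((r - 1) / (r + 1)))"
      using False Some by (simp add: recip_rot_def st_Some)
    moreover have "of_real (2 * Re z / (r + 1)) - \<i> * of_real (2 * Im z / (r + 1))
        = of_real (2 / (r + 1)) * cnj z"
      by (simp add: complex_eq_iff)
    then have "sphere_recip_rot w (st v)
        = (2 / (r + 1) * Re (w * cnj z), 2 / (r + 1) * Im (w * cnj z), - ((r - 1) / (r + 1)))"
      unfolding Some st_Some sphere_recip_rot_def r_def[symmetric]
      by (simp add: mult.left_commute[of w])
    ultimately show ?thesis by simp
  qed (simp add: Some recip_rot_def sphere_recip_rot_def st_Some st_None)
qed (simp add: recip_rot_def sphere_recip_rot_def st_Some st_None)

lemma sphere_recip_rot_in_S2: "cmod w = 1 \<Longrightarrow> s \<in> S2 \<Longrightarrow> sphere_recip_rot w s \<in> S2"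
  by (metis st_st_inv st_recip_rot st_in_S2)

lemma glue_inside:
  fixes d0 k :: nat
  assumes z: "cmod z \<le> 1" and d0: "2 \<le> d0"
    and f: "\<And>z. cmod z = 1 \<Longrightarrow> f z = z ^ d0" and g: "\<And>z. cmod z = 1 \<Longrightarrow> g z = z ^ d0"
  defines "\<omega> \<equiv> cis (2 * pi * real k / real (d0 - 1))"
  shows "glue f g d0 k (Some z) = recip_rot \<omega> (map_option g (recip_rot \<omega> (Some z)))"
proof -
  have \<omega>: "cmod \<omega> = 1" "\<omega> \<noteq> 0" by (auto simp: \<omega>_def)
  have "\<omega> ^ (d0 - 1) = cis (real (d0 - 1) * (2 * pi * real k / real (d0 - 1)))"
    unfolding \<omega>_def by (rule Complex.DeMoivre)
  also have "\<dots> = cis (2 * pi * real k)" using d0 by simp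
  finally have "\<omega> ^ (d0 - 1) = 1" by simp
  moreover have "d0 = Suc (d0 - 1)" using d0 by simp
  ultimately have "\<omega> ^ d0 = \<omega>" by (metis power_Suc2 mult_1)
  have iota: "iota d0 k \<zeta> = \<omega> / \<zeta>" for \<zeta> by (simp add: iota_def \<omega>_def)
  consider "z = 0" | "cmod z = 1" | "z \<noteq> 0" "cmod z < 1" using z by fastforce
  then show ?thesis
  proof cases
    case 2
    \<comment> \<open>On the unit circle glue is given by f, and the inner branch agrees since \<omega>^(d0-1) = 1.\<close>
    then have "z \<noteq> 0" by auto
    have "cmod (\<omega> / z) = 1" using 2 \<omega> by (simp add: norm_divide)
    then have "g (\<omega> / z) = \<omega> / z ^ d0" using g \<open>\<omega> ^ d0 = \<omega>\<close> by (simp add: power_divide)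
    then show ?thesis using 2 f[OF 2] \<omega> \<open>z \<noteq> 0\<close> by (simp add: glue_def recip_rot_def iota)
  qed (auto simp: glue_def recip_rot_def iota)
qed

lemma height_st_Some: "snd (snd (st (Some z))) = ((cmod z)^2 - 1) / ((cmod z)^2 + 1)"
  by (simp add: st_Some)

lemma sphere_map_glue_upper:
  assumes "s \<in> S2" "0 \<le> snd (snd s)"
  shows "sphere_map (glue f g d0 k) s = sphere_map (map_option f) s"
proof (cases "st_inv s")
  case (Some z)
  have "0 \<le> ((cmod z)^2 - 1) / ((cmod z)^2 + 1)"
    using assms Some st_st_inv[of s] height_st_Some[of z] by simp
  then have "1 \<le> (cmod z)^2" by (smt (verit) divide_neg_pos zero_le_power2)
  then have "1 \<le> cmod z" using power2_le_imp_le[of 1 "cmod z"] by simp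
  then show ?thesis using Some by (simp add: sphere_map_def glue_def)
qed (simp add: sphere_map_def glue_def)

lemma sphere_map_glue_lower:
  fixes d0 k :: nat
  assumes s: "s \<in> S2" "snd (snd s) \<le> 0" and d0: "2 \<le> d0"
    and f: "\<And>z. cmod z = 1 \<Longrightarrow> f z = z ^ d0" and g: "\<And>z. cmod z = 1 \<Longrightarrow> g z = z ^ d0"
  defines "\<omega> \<equiv> cis (2 * pi * real k / real (d0 - 1))"
  shows "sphere_map (glue f g d0 k) s = sphere_recip_rot \<omega> (sphere_map (map_option g) (sphere_recip_rot \<omega> s))"
proof -
  have \<omega>: "cmod \<omega> = 1" by (simp add: \<omega>_def)
  have "s \<noteq> st None" using s by (auto simp: st_None)
  then obtain z where "st_inv s = Some z" using s(1) by (metis option.exhaust st_st_inv)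
  then have "s = st (Some z)" using st_st_inv[OF s(1)] by simp
  then have "((cmod z)^2 - 1) / ((cmod z)^2 + 1) \<le> 0" using s height_st_Some[of z] by simp
  then have "(cmod z)^2 \<le> 1" by (smt (verit) divide_pos_pos zero_le_power2)
  then have "cmod z \<le> 1" using power2_le_imp_le[of "cmod z" 1] by simp
  then show ?thesis
    using \<open>s = st (Some z)\<close> glue_inside[OF \<open>cmod z \<le> 1\<close> d0 f g, of k, folded \<omega>_def]
      st_recip_rot[OF \<omega>, of "Some z", symmetric]
      st_recip_rot[OF \<omega>, of "map_option g (recip_rot \<omega> (Some z))"]
    by simp
qed

lemma continuous_on_sphere_glue:
  fixes f g :: "complex \<Rightarrow> complex" and d0 k :: nat
  assumes f: "continuous_on UNIV f" "filterlim f at_infinity at_infinity" "\<And>z. cmod z = 1 \<Longrightarrow> f z = z ^ d0"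
    and g: "continuous_on UNIV g" "filterlim g at_infinity at_infinity" "\<And>z. cmod z = 1 \<Longrightarrow> g z = z ^ d0"
    and d0: "2 \<le> d0"
  shows "continuous_on S2 (sphere_map (glue f g d0 k))"
proof -
  define \<omega> where "\<omega> = cis (2 * pi * real k / real (d0 - 1))"
  define upper where "upper = S2 \<inter> {s. 0 \<le> snd (snd s)}"
  define lower where "lower = S2 \<inter> {s. snd (snd s) \<le> 0}"
  have "continuous_on upper (sphere_map (map_option f))"
    using continuous_on_sphere_map_option[OF f(1,2)] by (rule continuous_on_subset) (simp add: upper_def)
  then have "continuous_on upper (sphere_map (glue f g d0 k))"
    by (rule continuous_on_eq) (simp add: upper_def sphere_map_glue_upper)
  moreover have "sphere_recip_rot \<omega> ` lower \<subseteq> S2"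
    using sphere_recip_rot_in_S2 by (auto simp: lower_def \<omega>_def)
  then have "continuous_on lower (sphere_recip_rot \<omega> \<circ> sphere_map (map_option g) \<circ> sphere_recip_rot \<omega>)"
    by (intro continuous_on_compose continuous_on_sphere_recip_rot
        continuous_on_subset[OF continuous_on_sphere_map_option[OF g(1,2)]])
  then have "continuous_on lower (sphere_map (glue f g d0 k))"
    by (rule continuous_on_eq) (simp add: lower_def sphere_map_glue_lower[OF _ _ d0 f(3) g(3)] \<omega>_def)
  moreover have "closed upper" "closed lower"
    unfolding upper_def lower_def by (intro closed_Int closed_sphere closed_Collect_le continuous_intros)+
  moreover have "S2 = upper \<union> lower" by (auto simp: upper_def lower_def)
  ultimately show ?thesis by (metis continuous_on_closed_Un)
qed

lemma filterlim_homeomorphism_at_infinity: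
  fixes \<phi> :: "'a::real_normed_vector \<Rightarrow> 'b::{real_normed_vector, heine_borel}"
  assumes h: "homeomorphism UNIV UNIV \<phi> \<psi>"
  shows "filterlim \<phi> at_infinity at_infinity"
  unfolding filterlim_at_infinity[OF order_refl] eventually_at_infinity
proof (intro allI impI)
  fix r :: real assume "0 < r"
  have "continuous_on UNIV \<psi>" using h by (simp add: homeomorphism_def)
  then have "compact (\<psi> ` cball 0 r)"
    by (rule compact_continuous_image[OF continuous_on_subset]) auto
  then obtain M where M: "\<forall>y\<in>\<psi> ` cball 0 r. norm y \<le> M"
    using compact_imp_bounded bounded_iff by metis
  show "\<exists>b. \<forall>x::'a. b \<le> norm x \<longrightarrow> r \<le> norm (\<phi> x)"
  proof (intro exI allI impI)
    fix x :: 'a assume x: "M + 1 \<le> norm x"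
    show "r \<le> norm (\<phi> x)"
    proof (rule ccontr)
      assume "\<not> r \<le> norm (\<phi> x)"
      then have "norm (\<psi> (\<phi> x)) \<le> M" using M by simp
      moreover have "\<psi> (\<phi> x) = x" using h by (simp add: homeomorphism_def)
      ultimately show False using x by simp
    qed
  qed
qed

lemma normalized_pcf_poly_conj:
  fixes f :: "complex \<Rightarrow> complex"
  assumes "normalized_pcf_poly d0 f"
  obtains p :: "complex poly" and \<phi> \<psi> :: "complex \<Rightarrow> complex"
  where "degree p \<ge> 2" "homeomorphism UNIV UNIV \<phi> \<psi>"
    "\<And>z. f z = \<psi> (poly p (\<phi> z))" "\<And>z. z \<in> ball 0 1 \<Longrightarrow> f z = z ^ d0"
proof -
  obtain p :: "complex poly" and \<phi> \<psi> :: "complex \<Rightarrow> complex"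
    where "degree p \<ge> 2" and h: "homeomorphism UNIV UNIV \<phi> \<psi>"
    and "\<forall>z. \<phi> (f z) = poly p (\<phi> z)" "\<forall>z \<in> ball 0 1. f z = z ^ d0"
    using assms unfolding normalized_pcf_poly_def Let_def by (elim exE conjE) blast
  moreover have "f z = \<psi> (poly p (\<phi> z))" for z
    using h \<open>\<forall>z. \<phi> (f z) = poly p (\<phi> z)\<close> by (metis homeomorphism_def UNIV_I)
  ultimately show thesis using that by blast
qed

lemma continuous_normalized_pcf_poly:
  fixes f :: "complex \<Rightarrow> complex"
  assumes "normalized_pcf_poly d0 f"
  shows "continuous_on UNIV f"
proof -
  obtain p :: "complex poly" and \<phi> \<psi> :: "complex \<Rightarrow> complex"
    where "degree p \<ge> 2" and h: "homeomorphism UNIV UNIV \<phi> \<psi>"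
    and f: "\<And>z. f z = \<psi> (poly p (\<phi> z))" and "\<And>z. z \<in> ball 0 1 \<Longrightarrow> f z = z ^ d0"
    using normalized_pcf_poly_conj[OF assms] by blast
  have "continuous_on UNIV \<phi>" "continuous_on UNIV \<psi>" using h by (simp_all add: homeomorphism_def)
  then have "continuous_on UNIV (\<lambda>z. \<psi> (poly p (\<phi> z)))"
    by (intro continuous_on_compose2[of UNIV \<psi> UNIV "\<lambda>z. poly p (\<phi> z)"] continuous_intros) auto
  then show ?thesis by (simp add: f[abs_def])
qed

lemma filterlim_normalized_pcf_poly:
  fixes f :: "complex \<Rightarrow> complex"
  assumes "normalized_pcf_poly d0 f"
  shows "filterlim f at_infinity at_infinity"
proof -
  obtain p :: "complex poly" and \<phi> \<psi> :: "complex \<Rightarrow> complex"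
    where "degree p \<ge> 2" and h: "homeomorphism UNIV UNIV \<phi> \<psi>"
    and f: "\<And>z. f z = \<psi> (poly p (\<phi> z))" and "\<And>z. z \<in> ball 0 1 \<Longrightarrow> f z = z ^ d0"
    using normalized_pcf_poly_conj[OF assms] by blast
  have "filterlim (poly p) at_infinity at_infinity"
    using \<open>degree p \<ge> 2\<close> by (intro filterlim_poly_at_infinity) simp
  then have "filterlim (\<lambda>z. poly p (\<phi> z)) at_infinity at_infinity"
    by (rule filterlim_compose[OF _ filterlim_homeomorphism_at_infinity[OF h]])
  then have "filterlim (\<lambda>z. \<psi> (poly p (\<phi> z))) at_infinity at_infinity"
    by (rule filterlim_compose[OF filterlim_homeomorphism_at_infinity[OF homeomorphism_symD[OF h]]])
  then show ?thesis by (simp add: f[abs_def])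
qed

lemma normalized_pcf_poly_on_circle:
  fixes f :: "complex \<Rightarrow> complex"
  assumes "normalized_pcf_poly d0 f" "cmod z = 1"
  shows "f z = z ^ d0"
proof -
  have "closed {z. f z = z ^ d0}"
    using continuous_normalized_pcf_poly[OF assms(1)] by (intro closed_Collect_eq continuous_intros) auto
  moreover have "ball 0 1 \<subseteq> {z. f z = z ^ d0}"
    using normalized_pcf_poly_conj[OF assms(1)] by blast
  ultimately have "closure (ball 0 1) \<subseteq> {z. f z = z ^ d0}"
    by (intro closure_minimal)
  then have "cball 0 1 \<subseteq> {z. f z = z ^ d0}" by simp
  moreover have "z \<in> cball 0 1" using assms(2) by simp
  ultimately show ?thesis by blast
qed

section \<open>Pulling back curves\<close>

lemma openin_sphere_injective_image:
  fixes G :: "'a::euclidean_space \<Rightarrow> 'a"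
  assumes contG: "continuous_on (sphere 0 1) G" and GS: "G ` sphere 0 1 \<subseteq> sphere 0 1"
    and V: "openin (top_of_set (sphere 0 1)) V" and inj: "inj_on G V"
  shows "openin (top_of_set (sphere 0 1)) (G ` V)"
proof (rule openin_subopen[THEN iffD2], clarify)
  fix a assume "a \<in> V"
  have VS: "V \<subseteq> sphere 0 1" using V openin_imp_subset by blast
  define y where "y = G a"
  have "y \<in> sphere 0 1" using \<open>a \<in> V\<close> VS GS unfolding y_def by blast
  then have y: "y \<in> sphere 0 1" "y \<noteq> 0" "-y \<in> sphere 0 1" by auto
  have "y \<noteq> -y"
  proof
    assume "y = -y"
    then have "(2::real) *\<^sub>R y = 0" by (metis add.right_inverse scaleR_2)
    then show False using y(2) by simp
  qed
  define V' where "V' = V \<inter> (sphere 0 1 \<inter> G -` (- {-y}))"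
  have openV': "openin (top_of_set (sphere 0 1)) V'" unfolding V'_def
    by (rule openin_Int[OF V continuous_openin_preimage_gen[OF contG]]) auto
  have V'sub: "G ` V' \<subseteq> sphere 0 1 - {-y}" using GS VS by (auto simp: V'_def)
  define T where "T = {x. y \<bullet> x = 0}"
  have "(sphere 0 1 - {-y}) homeomorphic T"
    unfolding T_def by (rule homeomorphic_punctured_sphere_hyperplane) (use y in auto)
  then obtain h k where hk: "homeomorphism (sphere 0 1 - {-y}) T h k" unfolding homeomorphic_def by blast
  then have cont_h: "continuous_on (sphere 0 1 - {-y}) h"
    and kh: "\<And>x. x \<in> sphere 0 1 - {-y} \<Longrightarrow> k (h x) = x" and hT: "h ` (sphere 0 1 - {-y}) = T"
    by (simp_all add: homeomorphism_def)
  have "openin (top_of_set T) ((h \<circ> G) ` V')"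
  proof (rule invariance_of_domain_sphere_affine_set[OF _ _ _ _ _ _ openV'])
    have "continuous_on V' G" using contG by (rule continuous_on_subset) (auto simp: V'_def)
    then show "continuous_on V' (h \<circ> G)"
      by (rule continuous_on_compose[OF _ continuous_on_subset[OF cont_h V'sub]])
    show "inj_on (h \<circ> G) V'"
    proof (rule comp_inj_on)
      show "inj_on G V'" using inj by (rule inj_on_subset) (auto simp: V'_def)
      show "inj_on h (G ` V')" by (rule inj_on_inverseI[of _ k]) (use kh V'sub in blast)
    qed
    show "h \<circ> G \<in> V' \<rightarrow> T"
    proof
      fix x assume "x \<in> V'"
      then have "G x \<in> sphere 0 1 - {-y}" using V'sub by blast
      then show "(h \<circ> G) x \<in> T" using hT by auto
    qed
    show "affine T" "aff_dim T < int DIM('a)"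
      using aff_dim_hyperplane[OF \<open>y \<noteq> 0\<close>, of 0] unfolding T_def by (auto intro: affine_hyperplane)
  qed simp
  then have "openin (top_of_set (sphere 0 1 - {-y})) (k ` (h \<circ> G) ` V')"
    by (rule homeomorphism_imp_open_map[OF homeomorphism_symD[OF hk]])
  moreover have "k (h (G x)) = G x" if "x \<in> V'" for x
    using that V'sub kh by blast
  then have "k ` (h \<circ> G) ` V' = G ` V'"
    unfolding image_comp by (intro image_cong) auto
  moreover have "openin (top_of_set (sphere 0 1)) (sphere 0 1 - {-y})" by (simp add: openin_delete)
  ultimately have "openin (top_of_set (sphere 0 1)) (G ` V')" using openin_trans by metis
  moreover have "y \<in> G ` V'" using \<open>a \<in> V\<close> VS \<open>y \<noteq> -y\<close> by (auto simp: V'_def y_def)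
  moreover have "G ` V' \<subseteq> G ` V" by (auto simp: V'_def)
  ultimately show "\<exists>U. openin (top_of_set (sphere 0 1)) U \<and> G a \<in> U \<and> U \<subseteq> G ` V"
    unfolding y_def by blast
qed

lemma image_postcrit_subset: "F ` postcrit F \<subseteq> postcrit F"
proof clarify
  fix w assume "w \<in> postcrit F"
  then obtain n c where "w = (F ^^ n) c" "n \<ge> 1" "c \<in> critical_points F"
    unfolding postcrit_def by blast
  then have "F w = (F ^^ Suc n) c" "Suc n \<ge> 1" by auto
  then show "F w \<in> postcrit F" using \<open>c \<in> critical_points F\<close> unfolding postcrit_def by blast
qed

lemma image_critical_points_subset: "F ` critical_points F \<subseteq> postcrit F"
  unfolding postcrit_def by (force intro: exI[of _ 1])

lemma sphere_map_locally_injective: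
  assumes "a \<in> S2" "st_inv a \<notin> critical_points F"
  obtains e where "0 < e" "inj_on (sphere_map F) (S2 \<inter> ball a e)"
proof -
  have "\<exists>e>0. inj_on F {w. dist (st w) (st (st_inv a)) < e}"
    using assms(2) unfolding critical_points_def by simp
  then obtain e where e: "0 < e" "inj_on F {w. dist (st w) a < e}"
    unfolding st_st_inv[OF assms(1)] by blast
  have "inj_on (sphere_map F) (S2 \<inter> ball a e)"
  proof (rule inj_onI)
    fix s1 s2 assume s1: "s1 \<in> S2 \<inter> ball a e" and s2: "s2 \<in> S2 \<inter> ball a e"
      and eq: "sphere_map F s1 = sphere_map F s2"
    have st1: "st (st_inv s1) = s1" and st2: "st (st_inv s2) = s2"
      using s1 s2 st_st_inv by auto
    have "F (st_inv s1) = F (st_inv s2)" using eq by (simp add: sphere_map_def)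
    moreover have "st_inv s1 \<in> {w. dist (st w) a < e}" "st_inv s2 \<in> {w. dist (st w) a < e}"
      using s1 s2 st1 st2 by (simp_all add: dist_commute)
    ultimately have "st_inv s1 = st_inv s2" by (rule inj_onD[OF e(2)])
    then show "s1 = s2" using st1 st2 by metis
  qed
  then show thesis using e(1) that by blast
qed

lemma openin_image_locally_injective_sphere:
  fixes G :: "'a::euclidean_space \<Rightarrow> 'a"
  assumes contG: "continuous_on (sphere 0 1) G" and GS: "G ` sphere 0 1 \<subseteq> sphere 0 1"
    and A: "A = sphere 0 1 \<inter> G -` B" and BS: "B \<subseteq> sphere 0 1"
    and locinj: "\<And>a. a \<in> A \<Longrightarrow> \<exists>e>0. inj_on G (sphere 0 1 \<inter> ball a e)"
    and W: "openin (top_of_set A) W"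
  shows "openin (top_of_set B) (G ` W)"
proof (rule openin_subopen[THEN iffD2], clarify)
  fix a assume "a \<in> W"
  obtain U0 where U0: "open U0" "W = A \<inter> U0" using W openin_open by metis
  then have "a \<in> A" using \<open>a \<in> W\<close> by blast
  then obtain e where e: "0 < e" "inj_on G (sphere 0 1 \<inter> ball a e)" using locinj by blast
  define V where "V = sphere 0 1 \<inter> (ball a e \<inter> U0)"
  have "openin (top_of_set (sphere 0 1)) V" unfolding V_def using U0(1) by (intro openin_open_Int) auto
  moreover have "inj_on G V" using e(2) by (rule inj_on_subset) (auto simp: V_def)
  ultimately have "openin (top_of_set (sphere 0 1)) (G ` V)"
    by (rule openin_sphere_injective_image[OF contG GS])
  then obtain U where U: "open U" "G ` V = sphere 0 1 \<inter> U" using openin_open by metis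
  have "G ` V \<inter> B = B \<inter> U" using U BS by auto
  then have "openin (top_of_set B) (G ` V \<inter> B)" using U(1) openin_open by metis
  moreover have "G a \<in> G ` V \<inter> B" using \<open>a \<in> W\<close> \<open>a \<in> A\<close> e(1) U0 by (auto simp: V_def A)
  moreover have "G ` V \<inter> B \<subseteq> G ` W" using U0 by (auto simp: V_def A)
  ultimately show "\<exists>T. openin (top_of_set B) T \<and> G a \<in> T \<and> T \<subseteq> G ` W" by blast
qed

lemma covering_space_sphere_map:
  assumes cont: "continuous_on S2 (sphere_map F)"
    and forward: "F ` P \<subseteq> P" and crit: "F ` critical_points F \<subseteq> P"
  defines "B \<equiv> st ` (UNIV - P)"
  defines "A \<equiv> S2 \<inter> sphere_map F -` B"
  shows "covering_space A (sphere_map F) (sphere_map F ` A)"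
    and "\<And>y. y \<in> sphere_map F ` A \<Longrightarrow> finite (A \<inter> sphere_map F -` {y})"
    and "openin (top_of_set B) (sphere_map F ` A)" and "closedin (top_of_set B) (sphere_map F ` A)"
    and "A \<subseteq> B"
proof -
  have A_eq: "A = S2 \<inter> sphere_map F -` B" by (simp add: A_def)
  have GS: "sphere_map F ` S2 \<subseteq> S2" using st_in_S2 by (auto simp: sphere_map_def)
  have BS: "B \<subseteq> S2" using st_in_S2 by (auto simp: B_def)
  have A_st: "st_inv a \<in> UNIV - P" "F (st_inv a) \<notin> P" if "a \<in> A" for a
    using that forward st_st_inv by (auto simp: A_def B_def sphere_map_def)
  show "A \<subseteq> B"
  proof
    fix a assume "a \<in> A"
    then have "a = st (st_inv a)" using st_st_inv by (simp add: A_def)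
    then show "a \<in> B" using A_st(1)[OF \<open>a \<in> A\<close>] unfolding B_def by (metis imageI)
  qed
  have locinj: "\<exists>e>0. inj_on (sphere_map F) (S2 \<inter> ball a e)" if "a \<in> A" for a
  proof -
    have "st_inv a \<notin> critical_points F" using A_st[OF that] crit by blast
    then show ?thesis using that sphere_map_locally_injective[of a F] by (metis A_def IntD1)
  qed
  have open_map: "openin (top_of_set B) (sphere_map F ` W)" if "openin (top_of_set A) W" for W
    by (rule openin_image_locally_injective_sphere[OF cont GS A_eq BS locinj that])
  show "covering_space A (sphere_map F) (sphere_map F ` A)"
    by (rule covering_space_of_locally_injective_open_map[OF compact_sphere cont A_eq locinj open_map])
  show "finite (A \<inter> sphere_map F -` {y})" if "y \<in> sphere_map F ` A" for y
  proof -
    have "finite (S2 \<inter> sphere_map F -` {y})"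
      by (rule finite_fibre_of_locally_injective[OF compact_sphere cont])
         (use that locinj in \<open>auto simp: A_def\<close>)
    then show ?thesis by (rule finite_subset[rotated]) (auto simp: A_def)
  qed
  show "openin (top_of_set B) (sphere_map F ` A)" by (rule open_map) simp
  have "closed (sphere_map F ` S2)"
    by (rule compact_imp_closed[OF compact_continuous_image[OF cont compact_sphere]])
  moreover have "sphere_map F ` A = B \<inter> sphere_map F ` S2" by (auto simp: A_def)
  ultimately show "closedin (top_of_set B) (sphere_map F ` A)"
    by (simp add: closedin_closed_Int)
qed

lemma vimage_st_sphere_map:
  assumes "C \<inter> P = {}"
  shows "S2 \<inter> sphere_map F -` st ` (UNIV - P) \<inter> sphere_map F -` st ` C = st ` (F -` C)"
proof
  show "S2 \<inter> sphere_map F -` st ` (UNIV - P) \<inter> sphere_map F -` st ` C \<subseteq> st ` (F -` C)"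
  proof
    fix s assume s: "s \<in> S2 \<inter> sphere_map F -` st ` (UNIV - P) \<inter> sphere_map F -` st ` C"
    then have "s = st (st_inv s)" using st_st_inv by simp
    moreover have "F (st_inv s) \<in> C" using s by (auto simp: sphere_map_def)
    ultimately show "s \<in> st ` (F -` C)" by (metis imageI vimageI)
  qed
  show "st ` (F -` C) \<subseteq> S2 \<inter> sphere_map F -` st ` (UNIV - P) \<inter> sphere_map F -` st ` C"
  proof
    fix s assume "s \<in> st ` (F -` C)"
    then obtain w where w: "s = st w" "F w \<in> C" by blast
    then have "st (F w) \<in> st ` (UNIV - P)" using assms by blast
    then show "s \<in> S2 \<inter> sphere_map F -` st ` (UNIV - P) \<inter> sphere_map F -` st ` C"
      using w st_in_S2 by simp
  qed
qed

lemma curve_homotopic_lift_to_preimage_component: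
  assumes cont: "continuous_on S2 (sphere_map F)"
    and forward: "F ` P \<subseteq> P" and crit: "F ` critical_points F \<subseteq> P"
    and CP: "C \<inter> P = {}" and C': "preimage_component F C C'"
    and hom: "curve_homotopic P \<gamma> C"
  obtains \<gamma>' where "jordan_curve \<gamma>'" "curve_homotopic P \<gamma>' C'" "F ` \<gamma>' \<subseteq> \<gamma>"
proof -
  define B where "B = st ` (UNIV - P)"
  define A where "A = S2 \<inter> sphere_map F -` B"
  note cov = covering_space_sphere_map[OF cont forward crit, folded B_def, folded A_def]
  obtain p q where p: "simple_path p" "path_image p = st ` \<gamma>"
    and q: "simple_path q" "path_image q = st ` C" and hpq: "homotopic_loops B p q"
    using hom unfolding curve_homotopic_def B_def by blast
  obtain x where x: "x \<in> F -` C" "st ` C' = connected_component_set (st ` (F -` C)) (st x)"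
    using C' unfolding preimage_component_def by blast
  have Gx: "sphere_map F (st x) \<in> path_image q" using x(1) q(2) by simp
  moreover have xA: "st x \<in> A" using x(1) CP st_in_S2 by (auto simp: A_def B_def)
  ultimately have "homotopic_loops (sphere_map F ` A) p q"
    using homotopic_loops_in_clopen[OF hpq cov(3,4)] by blast
  then obtain p' q' where p': "simple_path p'" "pathfinish p' = pathstart p'"
      "sphere_map F ` path_image p' \<subseteq> path_image p"
    and q': "simple_path q'" "pathfinish q' = pathstart q'"
      "path_image q' = connected_component_set (A \<inter> sphere_map F -` path_image q) (st x)"
    and hA: "homotopic_loops A p' q'"
    using covering_space_lift_homotopic_simple_loops[OF cov(1,2) p(1) q(1) _ xA Gx] by blast
  have "A \<inter> sphere_map F -` path_image q = st ` (F -` C)"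
    unfolding A_def B_def q(2) by (rule vimage_st_sphere_map[OF CP])
  then have "path_image q' = st ` C'" using q'(3) x(2) by simp
  define \<gamma>' where "\<gamma>' = st -` path_image p'"
  have "path_image p' \<subseteq> S2" using homotopic_loops_imp_subset[OF hA] by (auto simp: A_def)
  then have st_\<gamma>': "st ` \<gamma>' = path_image p'" using range_st by (auto simp: \<gamma>'_def)
  show thesis
  proof
    show "jordan_curve \<gamma>'" unfolding jordan_curve_def using p' st_\<gamma>' by metis
    show "curve_homotopic P \<gamma>' C'"
      unfolding curve_homotopic_def
      using p'(1,2) q'(1,2) st_\<gamma>' \<open>path_image q' = st ` C'\<close>
        homotopic_loops_subset[OF hA cov(5)] by (auto simp: B_def)
    show "F ` \<gamma>' \<subseteq> \<gamma>"
    proof clarify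
      fix w assume "w \<in> \<gamma>'"
      then have "sphere_map F (st w) \<in> st ` \<gamma>" using p'(3) p(2) by (auto simp: \<gamma>'_def)
      then show "F w \<in> \<gamma>" by auto
    qed
  qed
qed

lemma Nint_le_image:
  assumes inj: "inj_on F L" and sub: "F ` \<gamma>' \<subseteq> \<gamma>"
  shows "Nint \<gamma>' L \<le> Nint \<gamma> (F ` L)"
proof (cases "finite (\<gamma> \<inter> F ` L)")
  case True
  have im: "F ` (\<gamma>' \<inter> L) \<subseteq> \<gamma> \<inter> F ` L" using sub by auto
  have inj': "inj_on F (\<gamma>' \<inter> L)" using inj by (rule inj_on_subset) auto
  have "finite (\<gamma>' \<inter> L)" using finite_imageD[OF finite_subset[OF im True] inj'] .
  moreover have "card (\<gamma>' \<inter> L) \<le> card (\<gamma> \<inter> F ` L)" by (rule card_inj_on_le[OF inj' im True])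
  ultimately show ?thesis using True by (simp add: Nint_def)
qed (simp add: Nint_def)

lemma complexity_le_of_lifts:
  assumes sep: "sep_family F F0"
    and lift: "\<And>\<gamma>. curve_homotopic P \<gamma> C \<Longrightarrow>
      \<exists>\<gamma>'. jordan_curve \<gamma>' \<and> curve_homotopic P \<gamma>' C' \<and> F ` \<gamma>' \<subseteq> \<gamma>"
  shows "complexity P F0 C' \<le> complexity P F0 C"
  unfolding complexity_def
proof (rule INF_mono)
  fix \<gamma> assume "\<gamma> \<in> {\<gamma>. jordan_curve \<gamma> \<and> curve_homotopic P \<gamma> C}"
  then obtain \<gamma>' where \<gamma>': "jordan_curve \<gamma>'" "curve_homotopic P \<gamma>' C'" "F ` \<gamma>' \<subseteq> \<gamma>"
    using lift by blast
  have "(\<Sum>L\<in>F0. Nint \<gamma>' L) \<le> (\<Sum>L\<in>F0. Nint \<gamma> (F ` L))"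
    using sep \<gamma>'(3) by (intro sum_mono Nint_le_image) (auto simp: sep_family_def)
  also have "\<dots> = (\<Sum>L\<in>F0. Nint \<gamma> L)"
    using sep by (intro sum.reindex_bij_betw) (simp add: sep_family_def)
  finally show "\<exists>\<gamma>''\<in>{\<gamma>. jordan_curve \<gamma> \<and> curve_homotopic P \<gamma> C'}.
      (\<Sum>L\<in>F0. Nint \<gamma>'' L) \<le> (\<Sum>L\<in>F0. Nint \<gamma> L)"
    using \<gamma>'(1,2) by blast
qed

theorem lemma4p1:
  fixes f g :: "complex \<Rightarrow> complex" and d0 k :: nat
    and F0 :: "complex option set set" and C C' :: "complex option set"
  assumes "2 \<le> d0" and "1 \<le> k" and "k \<le> d0 - 1"
    and "normalized_pcf_poly d0 f" and "normalized_pcf_poly d0 g"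
    and "sep_family (glue f g d0 k) F0"
    and "non_peripheral (postcrit (glue f g d0 k)) C"
    and "preimage_component (glue f g d0 k) C C'"
  shows "complexity (postcrit (glue f g d0 k)) F0 C' \<le> complexity (postcrit (glue f g d0 k)) F0 C"
proof (rule complexity_le_of_lifts[OF assms(6)])
  fix \<gamma> assume "curve_homotopic (postcrit (glue f g d0 k)) \<gamma> C"
  moreover have "continuous_on S2 (sphere_map (glue f g d0 k))"
    using assms(1,4,5)
    by (intro continuous_on_sphere_glue continuous_normalized_pcf_poly filterlim_normalized_pcf_poly)
       (auto intro: normalized_pcf_poly_on_circle)
  moreover have "C \<inter> postcrit (glue f g d0 k) = {}"
    using assms(7) by (simp add: non_peripheral_def)
  ultimately show "\<exists>\<gamma>'. jordan_curve \<gamma>' \<and> curve_homotopic (postcrit (glue f g d0 k)) \<gamma>' C'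
      \<and> glue f g d0 k ` \<gamma>' \<subseteq> \<gamma>"
    using curve_homotopic_lift_to_preimage_component[OF _ image_postcrit_subset
        image_critical_points_subset _ assms(8)] by metis
qed

end
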